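(* Let $A\in\mathbb{R}^{n\times n}$ be Metzler, $J\in\mathbb{R}^{n\times n}$ be nonnegative and $\bar T>0$. The following statements are equivalent: (a) The impulsive system is asymptotically stable under constant dwell-time $\bar T$ (i.e. when $T_k=\bar T$ for all $k$). (b) There exist $\lambda\in\mathbb{R}^n_{>0}$ and $\mu\in\mathbb{R}^n_{>0}$ such that, with $V(x)=\lambda^\top x$, one has $V(Je^{A\bar T}x)-V(x)\le-\mu^\top x$ for all $x\in\mathbb{R}^n_{\ge0}$ (i.e. $V(x(t_{k+1}^+))-V(x(t_k^+))\le -\mu^\top x(t_k^+)$ along all trajectories). (c) There exists $\lambda\in\mathbb{R}^n_{>0}$ such that $\lambda^\top(Je^{A\bar T}-I_n)<0$; equivalently, $Je^{A\bar T}$ is Schur stable. (d) There exists $\lambda\in\mathbb{R}^n_{>0}$ such that $(Je^{A\bar T}-I_n)\lambda<0$; equivalently, $e^{A^\top\bar T}J^\top$ is Schur stable. (e) There exist a differentiable function $\zeta:[0,\bar T]\to\mathbb{R}^n$ with $\zeta(\bar T)\in\mathbb{R}^n_{>0}$ and a scalar $\varepsilon>0$ such that $\zeta(\tau)^\top A-\dot\zeta(\tau)^\top\le 0$ for all $\tau\in[0,\bar T]$ and $\zeta(\bar T)^\top J-\zeta(0)^\top+\varepsilon\mathbf{1}_n^\top\le0$. (f) There exist a differentiable function $\xi:[0,\bar T]\to\mathbb{R}^n$ with $\xi(0)\in\mathbb{R}^n_{>0}$ and a scalar $\varepsilon>0$ such that $\xi(\tau)^\top A+\dot\xi(\tau)^\top\le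 0$ for all $\tau\in[0,\bar T]$ and $\xi(0)^\top J-\xi(\bar T)^\top+\varepsilon\mathbf{1}_n^\top\le0$.
   Context: Consider the linear impulsive system $\dot x(t)=Ax(t)$ for $t\neq t_k$, $x(t_k^+)=Jx(t_k)$, $x(t_0)=x_0$, where $x(t)\in\mathbb{R}^n$, $x(t^+):=\lim_{s\downarrow t}x(s)$, and the impulse times $\{t_k\}_{k\in\mathbb{N}}$ are strictly increasing with $t_k\to\infty$; $T_k:=t_{k+1}-t_k$. A matrix is Metzler if its off-diagonal entries are nonnegative, nonnegative if all entries are nonnegative, and Schur stable if its spectral radius is $<1$. Vector inequalities are componentwise; $\mathbf{1}_n$ is the $n$-vector of ones. The system is asymptotically stable under a given dwell-time constraint if its zero solution is globally asymptotically stable for every impulse sequence whose dwell-times satisfy the constraint. *)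

theory Defs
  imports "HOL-Analysis.Analysis"
begin

fun matpow :: "real^'n^'n \<Rightarrow> nat \<Rightarrow> real^'n^'n" where
  "matpow M 0 = mat 1"
| "matpow M (Suc k) = M ** matpow M k"

definition mexp :: "real^'n^'n \<Rightarrow> real^'n^'n" where
  "mexp M = (\<Sum>k. (1 / fact k) *\<^sub>R matpow M k)"

definition metzler :: "real^'n^'n \<Rightarrow> bool" where
  "metzler M \<longleftrightarrow> (\<forall>i j. i \<noteq> j \<longrightarrow> 0 \<le> M $ i $ j)"

definition nonneg_mat :: "real^'n^'n \<Rightarrow> bool" where
  "nonneg_mat M \<longleftrightarrow> (\<forall>i j. 0 \<le> M $ i $ j)"

definition pos_vec :: "real^'n \<Rightarrow> bool" where
  "pos_vec v \<longleftrightarrow> (\<forall>i. 0 < v $ i)"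

definition nonneg_vec :: "real^'n \<Rightarrow> bool" where
  "nonneg_vec v \<longleftrightarrow> (\<forall>i. 0 \<le> v $ i)"

definition neg_vec :: "real^'n \<Rightarrow> bool" where
  "neg_vec v \<longleftrightarrow> (\<forall>i. v $ i < 0)"

definition nonpos_vec :: "real^'n \<Rightarrow> bool" where
  "nonpos_vec v \<longleftrightarrow> (\<forall>i. v $ i \<le> 0)"

definition cmat :: "real^'n^'n \<Rightarrow> complex^'n^'n" where
  "cmat M = (\<chi> i j. complex_of_real (M $ i $ j))"

definition schur_stable :: "real^'n^'n \<Rightarrow> bool" where
  "schur_stable M \<longleftrightarrow>
     (\<forall>c::complex. (\<exists>v::complex^'n. v \<noteq> 0 \<and> cmat M *v v = c *s v) \<longrightarrow> cmod c < 1)"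

text \<open>The trajectory is left-continuous: on each (t_k, t_{k+1}] it is continuous, solves the ODE
  in the interior, and its right limit at t_k equals J x(t_k).\<close>
definition impulsive_solution ::
  "real^'n^'n \<Rightarrow> real^'n^'n \<Rightarrow> real \<Rightarrow> real \<Rightarrow> real^'n \<Rightarrow> (real \<Rightarrow> real^'n) \<Rightarrow> bool" where
  "impulsive_solution A J T t0 x0 x \<longleftrightarrow>
     x t0 = x0 \<and>
     (\<forall>k::nat.
        let tk = t0 + real k * T; tk1 = t0 + real (Suc k) * T in
        continuous_on {tk<..tk1} x \<and>
        (\<forall>t\<in>{tk<..<tk1}. (x has_vector_derivative (A *v x t)) (at t)) \<and>
        (x \<longlongrightarrow> J *v x tk) (at_right tk))"

definition gas_const_dwell :: "real^'n^'n \<Rightarrow> real^'n^'n \<Rightarrow> real \<Rightarrow> bool" where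
  "gas_const_dwell A J T \<longleftrightarrow>
     (\<forall>t0.
        (\<forall>\<epsilon>>0. \<exists>\<delta>>0. \<forall>x0 x. impulsive_solution A J T t0 x0 x \<and> norm x0 < \<delta> \<longrightarrow>
                   (\<forall>t\<ge>t0. norm (x t) < \<epsilon>)) \<and>
        (\<forall>x0 x. impulsive_solution A J T t0 x0 x \<longrightarrow> (x \<longlongrightarrow> 0) at_top))"

end

theory Submission
  imports Defs
begin

text \<open>Between two impulses the state is propagated by \<open>e\<^sup>A\<^sup>T\<close> and then multiplied by \<open>J\<close>, so
  asymptotic stability under the constant dwell-time \<open>T\<close> amounts to \<open>P\<^sup>k \<rightarrow> 0\<close> for
  \<open>P = e\<^sup>A\<^sup>T J\<close>, equivalently for \<open>M = J e\<^sup>A\<^sup>T\<close>. Since \<open>A\<close> is Metzler, \<open>e\<^sup>A\<^sup>T\<close> and hence \<open>M\<close> are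
  nonnegative. For a nonnegative matrix, \<open>M\<^sup>k \<rightarrow> 0\<close> holds iff \<open>M \<lambda> < \<lambda>\<close> for some \<open>\<lambda> > 0\<close>
  (a weighted max-norm contraction one way, a partial Neumann sum the other way), and iff \<open>M\<close> is
  Schur stable (by Brouwer's fixed point theorem a nonnegative matrix without such \<open>\<lambda>\<close> has a
  nonnegative eigenvector with eigenvalue at least \<open>1\<close>). Applied to \<open>M\<close> and \<open>M\<^sup>T\<close> this gives
  (c), (d) and the two Schur conditions; (b) is (c) tested on the unit vectors; (e) is (c)
  transported along the co-state equation, along which \<open>\<zeta>(\<tau>)\<^sup>T e\<^sup>A\<^sup>(\<^sup>T\<^sup>-\<^sup>\<tau>\<^sup>)\<close> is
  monotone, and (f) is (e) in reversed time.\<close>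

section \<open>The Banach algebra of bounded operators on \<open>real^'n\<close>\<close>

text \<open>Matrices \<open>real^'n^'n\<close> carry the componentwise product, so the exponential of a Banach
  algebra is taken in this copy of the bounded operators; \<open>linop_of_mat\<close> and \<open>mat_of_linop\<close>
  translate between the two.\<close>
typedef (overloaded) ('n::finite) linop = "UNIV :: ((real^'n) \<Rightarrow>\<^sub>L (real^'n)) set"
  by auto
setup_lifting type_definition_linop

instantiation linop :: (finite) real_normed_vector
begin
lift_definition norm_linop :: "'a linop \<Rightarrow> real" is norm .
lift_definition minus_linop :: "'a linop \<Rightarrow> 'a linop \<Rightarrow> 'a linop" is "(-)" .
lift_definition plus_linop :: "'a linop \<Rightarrow> 'a linop \<Rightarrow> 'a linop" is "(+)" .
lift_definition uminus_linop :: "'a linop \<Rightarrow> 'a linop" is "uminus" .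
lift_definition zero_linop :: "'a linop" is "0" .
lift_definition scaleR_linop :: "real \<Rightarrow> 'a linop \<Rightarrow> 'a linop" is "scaleR" .
definition dist_linop :: "'a linop \<Rightarrow> 'a linop \<Rightarrow> real" where
  "dist_linop a b = norm (a - b)"
definition sgn_linop :: "'a linop \<Rightarrow> 'a linop" where
  "sgn_linop x = scaleR (inverse (norm x)) x"
definition uniformity_linop :: "('a linop \<times> 'a linop) filter" where
  "uniformity_linop = (INF e\<in>{0 <..}. principal {(x, y). dist x y < e})"
definition open_linop :: "'a linop set \<Rightarrow> bool" where
  "open_linop S = (\<forall>x\<in>S. \<forall>\<^sub>F (x', y) in uniformity. x' = x \<longrightarrow> y \<in> S)"
instance
  apply standard
  unfolding dist_linop_def open_linop_def sgn_linop_def uniformity_linop_def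
  apply (rule refl | (transfer, force simp: norm_triangle_ineq algebra_simps))+
  done
end

instantiation linop :: (finite) real_normed_algebra_1
begin
lift_definition times_linop :: "'a linop \<Rightarrow> 'a linop \<Rightarrow> 'a linop" is "blinfun_compose" .
lift_definition one_linop :: "'a linop" is "id_blinfun" .
instance
proof standard
  show "(0::'a linop) \<noteq> 1"
  proof transfer
    have "blinfun_apply (0::(real^'a) \<Rightarrow>\<^sub>L (real^'a)) 1 \<noteq> blinfun_apply id_blinfun 1"
      by simp
    then show "(0::(real^'a) \<Rightarrow>\<^sub>L (real^'a)) \<noteq> id_blinfun" by metis
  qed
  show "norm (1::'a linop) = 1" by transfer simp
  fix x y :: "'a linop"
  show "norm (x * y) \<le> norm x * norm y" by transfer (rule norm_blinfun_compose)
qed (transfer, rule blinfun_eqI, simp add: blinfun.bilinear_simps)+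
end

instance linop :: (finite) banach
proof
  fix X :: "nat \<Rightarrow> 'a linop"
  assume "Cauchy X"
  then have "Cauchy (\<lambda>n. Rep_linop (X n))"
    unfolding Cauchy_def dist_norm by (simp add: norm_linop.rep_eq minus_linop.rep_eq)
  then obtain l where l: "(\<lambda>n. Rep_linop (X n)) \<longlonglongrightarrow> l"
    using convergent_def Cauchy_convergent by blast
  have "X \<longlonglongrightarrow> Abs_linop l"
    using l unfolding tendsto_iff dist_norm
    by (simp add: norm_linop.rep_eq minus_linop.rep_eq Abs_linop_inverse)
  then show "convergent X" by (auto simp: convergent_def)
qed

definition linop_apply :: "'n::finite linop \<Rightarrow> real^'n \<Rightarrow> real^'n" where
  "linop_apply X v = blinfun_apply (Rep_linop X) v"

lemma linop_apply_mult: "linop_apply (X * Y) v = linop_apply X (linop_apply Y v)"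
  by (simp add: linop_apply_def times_linop.rep_eq)

lemma linop_apply_one [simp]: "linop_apply 1 v = v"
  by (simp add: linop_apply_def one_linop.rep_eq)

lemma linop_apply_add: "linop_apply (X + Y) v = linop_apply X v + linop_apply Y v"
  by (simp add: linop_apply_def plus_linop.rep_eq blinfun.bilinear_simps)

lemma linop_apply_scaleR: "linop_apply (c *\<^sub>R X) v = c *\<^sub>R linop_apply X v"
  by (simp add: linop_apply_def scaleR_linop.rep_eq blinfun.bilinear_simps)

lemma norm_linop_apply: "norm (linop_apply X v) \<le> norm X * norm v"
  by (simp add: linop_apply_def norm_linop.rep_eq norm_blinfun)

lemma linop_eqI: "(\<And>v. linop_apply X v = linop_apply Y v) \<Longrightarrow> X = Y"
  by (metis Rep_linop_inject linop_apply_def blinfun_eqI)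

lemma linear_linop_apply: "linear (linop_apply X)"
  unfolding linop_apply_def by (rule bounded_linear.linear[OF blinfun.bounded_linear_right])

definition linop_of_mat :: "real^'n^'n \<Rightarrow> 'n::finite linop" where
  "linop_of_mat A = Abs_linop (Blinfun (\<lambda>v. A *v v))"

definition mat_of_linop :: "'n::finite linop \<Rightarrow> real^'n^'n" where
  "mat_of_linop X = matrix (linop_apply X)"

lemma linop_apply_linop_of_mat [simp]: "linop_apply (linop_of_mat A) v = A *v v"
  by (simp add: linop_apply_def linop_of_mat_def Abs_linop_inverse
      bounded_linear_Blinfun_apply linear_conv_bounded_linear)

lemma mat_of_linop_mult_vec [simp]: "mat_of_linop X *v v = linop_apply X v"
  unfolding mat_of_linop_def by (simp add: matrix_works linear_linop_apply)

lemma linop_of_mat_of_linop [simp]: "linop_of_mat (mat_of_linop X) = X"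
  by (rule linop_eqI) simp

lemma mat_of_linop_of_mat [simp]: "mat_of_linop (linop_of_mat A) = A"
  unfolding mat_of_linop_def by (simp add: linop_apply_linop_of_mat[abs_def])

lemma linop_of_mat_inject: "linop_of_mat A = linop_of_mat B \<longleftrightarrow> A = B"
  by (metis mat_of_linop_of_mat)

lemma linop_of_mat_zero: "linop_of_mat 0 = 0"
proof (rule linop_eqI)
  have "linop_apply 0 v = 0" for v
    by (simp add: linop_apply_def zero_linop.rep_eq)
  then show "linop_apply (linop_of_mat 0) v = linop_apply 0 v" for v
    by simp
qed

lemma linop_of_mat_mult: "linop_of_mat (A ** B) = linop_of_mat A * linop_of_mat B"
  by (rule linop_eqI) (simp add: linop_apply_mult matrix_vector_mul_assoc)

lemma linop_of_mat_one: "linop_of_mat (mat 1) = 1"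
  by (rule linop_eqI) simp

lemma linop_of_mat_add: "linop_of_mat (A + B) = linop_of_mat A + linop_of_mat B"
  by (rule linop_eqI) (simp add: linop_apply_add matrix_vector_mult_add_rdistrib)

lemma linop_of_mat_scaleR: "linop_of_mat (c *\<^sub>R A) = c *\<^sub>R linop_of_mat A"
  by (rule linop_eqI) (simp add: linop_apply_scaleR scaleR_matrix_vector_assoc)

lemma linop_of_matpow: "linop_of_mat (matpow M k) = linop_of_mat M ^ k"
  by (induction k) (simp_all add: linop_of_mat_one linop_of_mat_mult)

lemma mat_of_linop_mult: "mat_of_linop (X * Y) = mat_of_linop X ** mat_of_linop Y"
  by (metis linop_of_mat_mult linop_of_mat_of_linop mat_of_linop_of_mat)

lemma bounded_linear_linop_of_mat: "bounded_linear (linop_of_mat :: real^'n^'n \<Rightarrow> 'n::finite linop)"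
  unfolding linear_conv_bounded_linear[symmetric]
  by (rule linearI) (simp_all add: linop_of_mat_add linop_of_mat_scaleR)

lemma mat_of_linop_scaleR: "mat_of_linop (c *\<^sub>R X) = c *\<^sub>R mat_of_linop X"
  by (metis linop_of_mat_scaleR linop_of_mat_of_linop mat_of_linop_of_mat)

lemma bounded_linear_mat_of_linop: "bounded_linear (mat_of_linop :: 'n::finite linop \<Rightarrow> real^'n^'n)"
proof (rule bounded_linear_intro[where K="real CARD('n) * real CARD('n)"])
  fix X Y :: "'n linop" and r :: real
  show "mat_of_linop (X + Y) = mat_of_linop X + mat_of_linop Y"
    by (metis linop_of_mat_add linop_of_mat_of_linop mat_of_linop_of_mat)
  show "mat_of_linop (r *\<^sub>R X) = r *\<^sub>R mat_of_linop X"
    by (rule mat_of_linop_scaleR)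
  have entry: "\<bar>mat_of_linop X $ i $ j\<bar> \<le> norm X" for i j
  proof -
    have "\<bar>mat_of_linop X $ i $ j\<bar> \<le> norm (linop_apply X (axis j 1))"
      unfolding mat_of_linop_def matrix_def by (simp add: component_le_norm_cart)
    also have "\<dots> \<le> norm X" using norm_linop_apply[of X "axis j 1"] by simp
    finally show ?thesis .
  qed
  have "norm (mat_of_linop X) \<le> (\<Sum>i\<in>UNIV. norm (mat_of_linop X $ i))"
    unfolding norm_vec_def by (rule L2_set_le_sum) simp
  also have "\<dots> \<le> (\<Sum>i\<in>UNIV. \<Sum>j\<in>UNIV. \<bar>mat_of_linop X $ i $ j\<bar>)"
    by (intro sum_mono norm_le_l1_cart)
  also have "\<dots> \<le> (\<Sum>i\<in>(UNIV::'n set). \<Sum>j\<in>(UNIV::'n set). norm X)"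
    by (intro sum_mono entry)
  finally show "norm (mat_of_linop X) \<le> norm X * (real CARD('n) * real CARD('n))"
    by (simp add: mult_ac)
qed

section \<open>The matrix exponential\<close>

lemma mexp_sums: "(\<lambda>k. (1 / fact k) *\<^sub>R matpow M k) sums mexp M"
proof -
  have "(\<lambda>k. mat_of_linop (linop_of_mat M ^ k /\<^sub>R fact k)) sums mat_of_linop (exp (linop_of_mat M))"
    by (rule bounded_linear.sums[OF bounded_linear_mat_of_linop exp_converges])
  then have "(\<lambda>k. (1 / fact k) *\<^sub>R matpow M k) sums mat_of_linop (exp (linop_of_mat M))"
    by (simp add: linop_of_matpow[symmetric] linop_of_mat_scaleR[symmetric] divide_inverse_commute)
  then show ?thesis
    unfolding mexp_def by (rule summable_sums[OF sums_summable])
qed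

lemma linop_of_mexp: "linop_of_mat (mexp M) = exp (linop_of_mat M)"
proof -
  have "(\<lambda>k. linop_of_mat ((1 / fact k) *\<^sub>R matpow M k)) sums linop_of_mat (mexp M)"
    by (rule bounded_linear.sums[OF bounded_linear_linop_of_mat mexp_sums])
  then have "(\<lambda>k. linop_of_mat M ^ k /\<^sub>R fact k) sums linop_of_mat (mexp M)"
    by (simp add: linop_of_mat_scaleR linop_of_matpow divide_inverse_commute)
  then show ?thesis by (rule sums_unique2[OF _ exp_converges])
qed

lemma mexp_scaleR: "mexp (t *\<^sub>R A) = mat_of_linop (exp (t *\<^sub>R linop_of_mat A))"
  by (metis linop_of_mexp linop_of_mat_scaleR mat_of_linop_of_mat)

lemma mexp_zero: "mexp 0 = (mat 1 :: real^'n::finite^'n)"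
proof -
  have "linop_of_mat (mexp 0) = linop_of_mat (mat 1 :: real^'n^'n)"
    by (simp add: linop_of_mexp linop_of_mat_zero linop_of_mat_one)
  then show ?thesis by (simp only: linop_of_mat_inject)
qed

lemma mexp_add: "mexp ((s + t) *\<^sub>R A) = mexp (s *\<^sub>R A) ** mexp (t *\<^sub>R A)"
proof -
  have "(s *\<^sub>R linop_of_mat A) * (t *\<^sub>R linop_of_mat A) = (t *\<^sub>R linop_of_mat A) * (s *\<^sub>R linop_of_mat A)"
    by (simp add: mult.commute)
  then show ?thesis
    by (simp only: mexp_scaleR) (simp add: scaleR_add_left exp_add_commuting mat_of_linop_mult)
qed

lemma mexp_inverse:
  "mexp (t *\<^sub>R A) ** mexp ((-t) *\<^sub>R A) = mat 1"
  "mexp ((-t) *\<^sub>R A) ** mexp (t *\<^sub>R A) = mat 1"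
  using mexp_add[of t "-t" A] mexp_add[of "-t" t A] by (simp_all add: mexp_zero)

lemma mexp_commute: "mexp (t *\<^sub>R A) ** A = A ** mexp (t *\<^sub>R A)"
proof -
  have "linop_of_mat (mexp (t *\<^sub>R A) ** A) = linop_of_mat (A ** mexp (t *\<^sub>R A))"
    by (simp add: linop_of_mat_mult linop_of_mexp linop_of_mat_scaleR exp_times_scaleR_commute)
  then show ?thesis by (simp only: linop_of_mat_inject)
qed

lemma has_vector_derivative_mexp:
  "((\<lambda>t. mexp (t *\<^sub>R A)) has_vector_derivative mexp (t *\<^sub>R A) ** A) (at t within S)"
  using bounded_linear.has_vector_derivative[OF bounded_linear_mat_of_linop
      exp_scaleR_has_vector_derivative_right[of "linop_of_mat A"]]
  by (simp add: mexp_scaleR mat_of_linop_mult)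

lemma has_vector_derivative_mexp_comp:
  assumes "(f has_real_derivative f') (at s within S)"
  shows "((\<lambda>s. mexp (f s *\<^sub>R A)) has_vector_derivative f' *\<^sub>R (mexp (f s *\<^sub>R A) ** A)) (at s within S)"
  using vector_diff_chain_within[OF assms[unfolded has_real_derivative_iff_has_vector_derivative]
      has_vector_derivative_mexp]
  by (simp add: o_def)

lemma continuous_mexp_comp:
  assumes "continuous (at s within S) f"
  shows "continuous (at s within S) (\<lambda>s. mexp (f s *\<^sub>R A))"
proof -
  have "continuous (at (f s) within f ` S) (\<lambda>t. mexp (t *\<^sub>R A))"
    by (rule has_vector_derivative_continuous[OF has_vector_derivative_mexp])
  then show ?thesis using continuous_within_compose[OF assms] by (simp add: o_def)
qed

lemma matpow_nonneg: "nonneg_mat M \<Longrightarrow> nonneg_mat (matpow M k)"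
  by (induction k) (auto simp: nonneg_mat_def mat_def matrix_matrix_mult_def intro!: sum_nonneg)

lemma nonneg_mat_mult: "nonneg_mat A \<Longrightarrow> nonneg_mat B \<Longrightarrow> nonneg_mat (A ** B)"
  by (auto simp: nonneg_mat_def matrix_matrix_mult_def intro!: sum_nonneg)

lemma nonneg_mat_transpose: "nonneg_mat (transpose A) \<longleftrightarrow> nonneg_mat A"
  by (auto simp: nonneg_mat_def transpose_def)

lemma nonneg_mexp:
  assumes B: "nonneg_mat B"
  shows "nonneg_mat (mexp B)"
  unfolding nonneg_mat_def
proof (intro allI)
  fix i j
  have "bounded_linear (\<lambda>X::real^'a^'a. X $ i $ j)"
    using bounded_linear_compose[OF bounded_linear_vec_nth[of j] bounded_linear_vec_nth[of i]]
    by simp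
  from bounded_linear.sums[OF this mexp_sums]
  have s: "(\<lambda>k. (1 / fact k) * matpow B k $ i $ j) sums (mexp B $ i $ j)" by simp
  have "0 \<le> (\<Sum>k. (1 / fact k) * matpow B k $ i $ j)"
    using matpow_nonneg[OF B] sums_summable[OF s]
    by (intro suminf_nonneg) (simp_all add: nonneg_mat_def)
  then show "0 \<le> mexp B $ i $ j"
    by (simp add: sums_unique[OF s])
qed

text \<open>Shifting a Metzler matrix by a multiple of the identity makes it nonnegative, and this
  shift only rescales the exponential by a positive factor.\<close>
lemma metzler_mexp_nonneg:
  fixes A :: "real^'n::finite^'n"
  assumes "metzler A" "0 \<le> t"
  shows "nonneg_mat (mexp (t *\<^sub>R A))"
proof -
  define c where "c = (\<Sum>i\<in>UNIV. \<bar>A $ i $ i\<bar>)"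
  define B where "B = A + c *\<^sub>R mat 1"
  have diag: "\<bar>A $ i $ i\<bar> \<le> c" for i
    unfolding c_def by (rule member_le_sum) auto
  have "0 \<le> A $ i $ i + c" for i
    using abs_le_D2[OF diag[of i]] by linarith
  then have "nonneg_mat (t *\<^sub>R B)"
    using assms by (auto simp: nonneg_mat_def B_def metzler_def mat_def)
  moreover have "exp (t *\<^sub>R linop_of_mat A) = exp (- (t * c)) *\<^sub>R exp (t *\<^sub>R linop_of_mat B)"
  proof -
    let ?B = "t *\<^sub>R linop_of_mat B" and ?c = "of_real (- (t * c)) :: 'n linop"
    have "t *\<^sub>R linop_of_mat A = ?B + ?c"
      by (simp add: B_def linop_of_mat_add linop_of_mat_scaleR linop_of_mat_one
          scaleR_add_right of_real_def)
    moreover have "?B * ?c = ?c * ?B"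
      by (simp add: of_real_def)
    then have "exp (?B + ?c) = exp ?B * exp ?c"
      by (rule exp_add_commuting)
    ultimately show ?thesis
      unfolding exp_of_real by (simp add: of_real_def)
  qed
  then have "mexp (t *\<^sub>R A) = exp (- (t * c)) *\<^sub>R mexp (t *\<^sub>R B)"
    by (simp add: mexp_scaleR mat_of_linop_scaleR)
  ultimately show ?thesis
    using nonneg_mexp[of "t *\<^sub>R B"] by (simp add: nonneg_mat_def)
qed

lemma matpow_transpose: "matpow (transpose M) k = transpose (matpow M k)"
proof (induction k)
  case (Suc k)
  have "linop_of_mat (matpow M (Suc k)) = linop_of_mat (matpow M k ** M)"
    by (simp add: linop_of_mat_mult linop_of_matpow power_commutes)
  then show ?case
    using Suc by (simp add: linop_of_mat_inject matrix_transpose_mul)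
qed (simp add: transpose_mat)

lemma mexp_transpose: "mexp (transpose M) = transpose (mexp M)"
proof -
  have "linear (transpose :: real^'n^'n \<Rightarrow> real^'n^'n)"
    by (rule linearI) (simp_all add: transpose_def vec_eq_iff)
  then have "bounded_linear (transpose :: real^'n^'n \<Rightarrow> real^'n^'n)"
    by (simp add: linear_conv_bounded_linear)
  from bounded_linear.sums[OF this mexp_sums]
  have "(\<lambda>k. (1 / fact k) *\<^sub>R matpow (transpose M) k) sums transpose (mexp M)"
    by (simp add: transpose_scalar matpow_transpose)
  then show ?thesis by (rule sums_unique2[OF mexp_sums])
qed

section \<open>Nonnegative matrices with vanishing powers\<close>

lemma bounded_bilinear_matrix_vector_mult:
  "bounded_bilinear (\<lambda>(B::real^'n::finite^'m::finite) v. B *v v)"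
proof -
  have "linear (\<lambda>B::real^'n^'m. B *v v)" for v
    by (rule linearI) (simp_all add: matrix_vector_mult_add_rdistrib scaleR_matrix_vector_assoc)
  then show ?thesis
    by (simp add: bilinear_conv_bounded_bilinear[symmetric] bilinear_def)
qed

lemma bounded_bilinear_vector_matrix_mult:
  "bounded_bilinear (\<lambda>v (B::real^'n::finite^'m::finite). v v* B)"
proof -
  have "linear (\<lambda>B::real^'n^'m. v v* B)" for v
    by (rule linearI) (simp_all add: vector_matrix_mult_add_rdistrib vector_scaleR_matrix_ac)
  moreover have "linear (\<lambda>v::real^'m. v v* B)" for B :: "real^'n^'m"
    by (rule linearI) (simp_all add: vector_matrix_left_distrib scaleR_vector_matrix_assoc)
  ultimately show ?thesis
    by (simp add: bilinear_conv_bounded_bilinear[symmetric] bilinear_def)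
qed

lemma matrix_vector_mult_uminus_left: "(- B) *v x = - (B *v (x::real^'n::finite))"
  by (simp add: matrix_vector_mult_def vec_eq_iff sum_negf)

definition matpow_vanishes :: "real^'n::finite^'n \<Rightarrow> bool" where
  "matpow_vanishes M \<longleftrightarrow> (\<lambda>k. matpow M k) \<longlonglongrightarrow> 0"

lemma matpow_vanishes_iff_linop:
  fixes M :: "real^'n::finite^'n"
  shows "matpow_vanishes M \<longleftrightarrow> (\<lambda>k. linop_of_mat M ^ k) \<longlonglongrightarrow> 0"
proof
  assume "matpow_vanishes M"
  then have "(\<lambda>k. linop_of_mat (matpow M k)) \<longlonglongrightarrow> linop_of_mat 0"
    unfolding matpow_vanishes_def by (rule bounded_linear.tendsto[OF bounded_linear_linop_of_mat])
  then show "(\<lambda>k. linop_of_mat M ^ k) \<longlonglongrightarrow> 0"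
    by (simp add: linop_of_matpow linop_of_mat_zero)
next
  assume "(\<lambda>k. linop_of_mat M ^ k) \<longlonglongrightarrow> 0"
  then have "(\<lambda>k. mat_of_linop (linop_of_mat M ^ k)) \<longlonglongrightarrow> mat_of_linop 0"
    by (rule bounded_linear.tendsto[OF bounded_linear_mat_of_linop])
  moreover have "mat_of_linop (0 :: 'n linop) = 0"
    using mat_of_linop_of_mat[of 0] by (simp only: linop_of_mat_zero)
  ultimately show "matpow_vanishes M"
    unfolding matpow_vanishes_def by (simp add: linop_of_matpow[symmetric])
qed

lemma power_tendsto_zero_mult_commute:
  fixes X Y :: "'a::real_normed_algebra_1"
  assumes "(\<lambda>k. (Y * X) ^ k) \<longlonglongrightarrow> 0"
  shows "(\<lambda>k. (X * Y) ^ k) \<longlonglongrightarrow> 0"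
proof -
  have "(X * Y) ^ Suc k = X * (Y * X) ^ k * Y" for k
    by (induction k) (simp_all add: mult.assoc power_commutes)
  moreover have "(\<lambda>k. X * (Y * X) ^ k * Y) \<longlonglongrightarrow> X * 0 * Y"
    by (intro tendsto_intros assms)
  ultimately have "(\<lambda>k. (X * Y) ^ Suc k) \<longlonglongrightarrow> 0"
    by simp
  then show ?thesis by (rule LIMSEQ_imp_Suc)
qed

lemma matpow_vanishes_mult_commute:
  fixes X Y :: "real^'n::finite^'n"
  shows "matpow_vanishes (X ** Y) \<longleftrightarrow> matpow_vanishes (Y ** X)"
  unfolding matpow_vanishes_iff_linop linop_of_mat_mult
  using power_tendsto_zero_mult_commute[of "linop_of_mat X" "linop_of_mat Y"]
    power_tendsto_zero_mult_commute[of "linop_of_mat Y" "linop_of_mat X"] by blast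

lemma matpow_vanishes_transpose:
  fixes M :: "real^'n::finite^'n"
  shows "matpow_vanishes (transpose M) \<longleftrightarrow> matpow_vanishes M"
proof -
  have "linear (transpose :: real^'n^'n \<Rightarrow> real^'n^'n)"
    by (rule linearI) (simp_all add: transpose_def vec_eq_iff)
  then have "bounded_linear (transpose :: real^'n^'n \<Rightarrow> real^'n^'n)"
    by (simp add: linear_conv_bounded_linear)
  moreover have "transpose (0::real^'n^'n) = 0" by (simp add: transpose_def vec_eq_iff)
  ultimately have "(\<lambda>k. transpose (matpow X k)) \<longlonglongrightarrow> 0" if "matpow_vanishes X" for X :: "real^'n^'n"
    using that bounded_linear.tendsto[of transpose "\<lambda>k. matpow X k" 0]
    unfolding matpow_vanishes_def by simp
  then have "matpow_vanishes (transpose X)" if "matpow_vanishes X" for X :: "real^'n^'n"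
    using that by (simp add: matpow_vanishes_def matpow_transpose)
  from this[of M] this[of "transpose M"] show ?thesis by auto
qed

lemma matrix_vector_mult_mono:
  assumes "nonneg_mat M" "\<And>j. u $ j \<le> w $ j"
  shows "(M *v u) $ i \<le> (M *v w) $ i"
  using assms unfolding matrix_vector_mult_def nonneg_mat_def
  by (auto intro!: sum_mono mult_left_mono)

lemma matrix_vector_mult_nonneg: "nonneg_mat M \<Longrightarrow> nonneg_vec x \<Longrightarrow> 0 \<le> (M *v x) $ i"
  unfolding matrix_vector_mult_def nonneg_mat_def nonneg_vec_def by (auto intro!: sum_nonneg)

lemma matrix_vector_mult_axis: "((B::real^'n::finite^'m::finite) *v axis j 1) $ i = B $ i $ j"
proof -
  have "(B *v axis j 1) $ i = (\<Sum>j'\<in>UNIV. B $ i $ j' * (if j' = j then 1 else 0))"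
    by (simp add: matrix_vector_mult_def axis_def)
  also have "\<dots> = B $ i $ j" by (simp add: if_distrib cong: if_cong)
  finally show ?thesis .
qed

lemma matpow_mult_vec_le:
  fixes M :: "real^'n::finite^'n"
  assumes M: "nonneg_mat M" and Ml: "\<And>i. (M *v lam) $ i \<le> r * lam $ i" and r: "0 \<le> r"
  shows "(matpow M k *v lam) $ i \<le> r ^ k * lam $ i"
proof (induction k arbitrary: i)
  case (Suc k)
  have "(matpow M (Suc k) *v lam) $ i \<le> (M *v (r ^ k *\<^sub>R lam)) $ i"
    unfolding matpow.simps matrix_vector_mul_assoc[symmetric]
    by (rule matrix_vector_mult_mono[OF M]) (simp add: Suc.IH)
  also have "\<dots> = r ^ k * (M *v lam) $ i"
    by (simp add: matrix_vector_mult_scaleR)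
  also have "\<dots> \<le> r ^ k * (r * lam $ i)"
    using Ml[of i] r by (intro mult_left_mono) simp_all
  finally show ?case by (simp add: mult_ac)
qed simp

text \<open>If \<open>M \<lambda> \<le> r \<lambda>\<close> with \<open>r < 1\<close>, then \<open>M\<^sup>k\<close> is entrywise bounded by \<open>r\<^sup>k\<close> times the ratios
  of the entries of \<open>\<lambda>\<close>.\<close>
lemma matpow_vanishes_if_subinvariant:
  fixes M :: "real^'n::finite^'n"
  assumes M: "nonneg_mat M" and lam: "pos_vec lam" and neg: "neg_vec ((M - mat 1) *v lam)"
  shows "matpow_vanishes M"
proof -
  have lp: "0 < lam $ i" for i using lam by (simp add: pos_vec_def)
  define r where "r = max 0 (Max (range (\<lambda>i. (M *v lam) $ i / lam $ i)))"
  have "(M *v lam) $ i < lam $ i" for i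
    using neg by (simp add: neg_vec_def matrix_vector_mult_diff_rdistrib)
  then have r0: "0 \<le> r" and r1: "r < 1"
    using lp by (auto simp: r_def divide_less_eq)
  have Ml: "(M *v lam) $ i \<le> r * lam $ i" for i
  proof -
    have "(M *v lam) $ i / lam $ i \<le> r" unfolding r_def by (rule max.coboundedI2) simp
    then show ?thesis using lp[of i] by (simp add: divide_le_eq)
  qed
  have pow: "(matpow M k *v lam) $ i \<le> r ^ k * lam $ i" for k i
    using matpow_mult_vec_le[OF M Ml r0] .
  have entry: "\<bar>matpow M k $ i $ j\<bar> \<le> (lam $ i / lam $ j) * r ^ k" for k i j
  proof -
    have nn: "nonneg_mat (matpow M k)" by (rule matpow_nonneg[OF M])
    then have "matpow M k $ i $ j * lam $ j \<le> (\<Sum>j'\<in>UNIV. matpow M k $ i $ j' * lam $ j')"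
      using lp by (intro member_le_sum) (auto simp: nonneg_mat_def less_imp_le)
    also have "\<dots> = (matpow M k *v lam) $ i"
      by (simp add: matrix_vector_mult_def)
    also have "\<dots> \<le> r ^ k * lam $ i" by (rule pow)
    finally show ?thesis
      using nn lp[of j] by (simp add: nonneg_mat_def pos_le_divide_eq mult.commute)
  qed
  have lim: "(\<lambda>k. (lam $ i / lam $ j) * r ^ k) \<longlonglongrightarrow> 0" for i j
    using r0 r1 by (intro tendsto_mult_right_zero LIMSEQ_power_zero) simp
  have bound: "\<forall>\<^sub>F k in sequentially. norm (matpow M k $ i $ j) \<le> (lam $ i / lam $ j) * r ^ k"
    for i j using entry by (intro always_eventually) simp
  have "(\<lambda>k. matpow M k $ i $ j) \<longlonglongrightarrow> 0" for i j
    using Lim_null_comparison[OF bound lim] .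
  then show ?thesis
    unfolding matpow_vanishes_def by (auto intro!: vec_tendstoI)
qed

lemma matrix_vector_mult_geometric_sum:
  "(M - mat 1) *v (\<Sum>k<K. matpow M k *v w) = matpow M K *v w - (w :: real^'n::finite)"
proof -
  have "M *v (\<Sum>k<K. matpow M k *v w) = (\<Sum>k<K. matpow M (Suc k) *v w)"
    by (induction K) (simp_all add: matrix_vector_right_distrib matrix_vector_mul_assoc)
  then have "(M - mat 1) *v (\<Sum>k<K. matpow M k *v w) = (\<Sum>k<K. matpow M (Suc k) *v w - matpow M k *v w)"
    by (simp add: matrix_vector_mult_diff_rdistrib sum_subtractf)
  also have "\<dots> = matpow M K *v w - w"
    by (subst sum_lessThan_telescope) simp
  finally show ?thesis .
qed

text \<open>The witness is the partial Neumann sum \<open>\<lambda> = \<Sum>k<K. M\<^sup>k \<one>\<close>, with \<open>K\<close> chosen such that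
  \<open>M\<^sup>K \<one> < \<one>\<close>.\<close>
lemma subinvariant_if_matpow_vanishes:
  fixes M :: "real^'n::finite^'n"
  assumes M: "nonneg_mat M" and Z: "matpow_vanishes M"
  shows "\<exists>lam. pos_vec lam \<and> neg_vec ((M - mat 1) *v lam)"
proof -
  define one :: "real^'n" where "one = (\<chi> i. 1)"
  have "bounded_linear (\<lambda>X::real^'n^'n. X *v one)"
    using bounded_bilinear.bounded_linear_left[OF bounded_bilinear_matrix_vector_mult] .
  from bounded_linear.tendsto[OF this Z[unfolded matpow_vanishes_def]]
  have "(\<lambda>k. matpow M k *v one) \<longlonglongrightarrow> 0" by simp
  then have "\<forall>i. ((\<lambda>k. (matpow M k *v one) $ i) \<longlongrightarrow> 0) sequentially"
    by (metis tendsto_vec_nth zero_index)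
  then have "\<forall>i. \<forall>\<^sub>F k in sequentially. (matpow M k *v one) $ i < 1"
    by (auto intro: order_tendstoD)
  then have "\<forall>\<^sub>F k in sequentially. \<forall>i. (matpow M k *v one) $ i < 1"
    by (intro eventually_all_finite) auto
  then obtain K where K: "\<forall>i. (matpow M K *v one) $ i < 1"
    by (auto simp: eventually_sequentially)
  have "K \<noteq> 0"
  proof
    assume "K = 0"
    with K show False by (simp add: one_def)
  qed
  define lam where "lam = (\<Sum>k<K. matpow M k *v one)"
  have "1 \<le> lam $ i" for i
  proof -
    have "(matpow M 0 *v one) $ i \<le> (\<Sum>k<K. (matpow M k *v one) $ i)"
      using \<open>K \<noteq> 0\<close>
      by (intro member_le_sum matrix_vector_mult_nonneg matpow_nonneg M)
        (auto simp: one_def nonneg_vec_def)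
    then show ?thesis by (simp add: lam_def one_def)
  qed
  then have "pos_vec lam" by (auto simp: pos_vec_def intro: less_le_trans[of 0 1])
  moreover have "(M - mat 1) *v lam = matpow M K *v one - one"
    unfolding lam_def by (rule matrix_vector_mult_geometric_sum)
  then have "neg_vec ((M - mat 1) *v lam)" using K by (simp add: neg_vec_def one_def)
  ultimately show ?thesis by blast
qed

lemma nonneg_matpow_vanishes_iff_subinvariant:
  "nonneg_mat M \<Longrightarrow> matpow_vanishes M \<longleftrightarrow> (\<exists>lam. pos_vec lam \<and> neg_vec ((M - mat 1) *v lam))"
  using matpow_vanishes_if_subinvariant subinvariant_if_matpow_vanishes by blast

lemma vector_matrix_mult_eq_transpose:
  "lam v* (M - mat 1) = (transpose M - mat 1) *v (lam::real^'n::finite)"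
  by (simp add: vector_matrix_mult_diff_rdistrib matrix_vector_mult_diff_rdistrib)

lemma nonneg_matpow_vanishes_iff_row_subinvariant:
  fixes M :: "real^'n::finite^'n"
  assumes "nonneg_mat M"
  shows "matpow_vanishes M \<longleftrightarrow> (\<exists>lam. pos_vec lam \<and> neg_vec (lam v* (M - mat 1)))"
  using nonneg_matpow_vanishes_iff_subinvariant[of "transpose M"] assms
  by (simp add: vector_matrix_mult_eq_transpose nonneg_mat_transpose matpow_vanishes_transpose)

section \<open>Schur stability of nonnegative matrices\<close>

lemma nonneg_mat_eigenvector_norm_le:
  fixes N :: "real^'n::finite^'n"
  assumes N: "nonneg_mat N" and ev: "cmat N *v v = c *s v"
  shows "cmod c * cmod (v $ i) \<le> (\<Sum>j\<in>UNIV. N $ i $ j * cmod (v $ j))"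
proof -
  have "cmod c * cmod (v $ i) = cmod ((cmat N *v v) $ i)"
    by (simp add: ev norm_mult)
  also have "\<dots> = cmod (\<Sum>j\<in>UNIV. complex_of_real (N $ i $ j) * v $ j)"
    by (simp add: matrix_vector_mult_def cmat_def)
  also have "\<dots> \<le> (\<Sum>j\<in>UNIV. cmod (complex_of_real (N $ i $ j) * v $ j))"
    by (rule norm_sum)
  also have "\<dots> = (\<Sum>j\<in>UNIV. N $ i $ j * cmod (v $ j))"
    using N by (simp add: norm_mult nonneg_mat_def)
  finally show ?thesis .
qed

text \<open>The weighted \<open>\<ell>\<^sub>1\<close>-norm \<open>\<Sum>\<^sub>i \<lambda>\<^sub>i \<bar>v\<^sub>i\<bar>\<close> of any complex eigenvector strictly decreases under \<open>N\<close>.\<close>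
lemma schur_stable_if_row_subinvariant:
  fixes N :: "real^'n::finite^'n"
  assumes N: "nonneg_mat N" and lam: "pos_vec lam" and neg: "neg_vec (lam v* (N - mat 1))"
  shows "schur_stable N"
  unfolding schur_stable_def
proof (intro allI impI)
  fix c :: complex
  assume "\<exists>v. v \<noteq> 0 \<and> cmat N *v v = c *s v"
  then obtain v where "v \<noteq> 0" and ev: "cmat N *v v = c *s v" by blast
  then obtain j0 where j0: "v $ j0 \<noteq> 0" by (metis vec_eq_iff zero_index)
  define a where "a = (\<lambda>i. cmod (v $ i))"
  have lp: "0 < lam $ i" for i using lam by (simp add: pos_vec_def)
  have eig: "cmod c * a i \<le> (\<Sum>j\<in>UNIV. N $ i $ j * a j)" for i
    unfolding a_def by (rule nonneg_mat_eigenvector_norm_le[OF N ev])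
  have col: "(\<Sum>i\<in>UNIV. lam $ i * N $ i $ j) < lam $ j" for j
  proof -
    have "(lam v* (N - mat 1)) $ j = (\<Sum>i\<in>UNIV. lam $ i * N $ i $ j) - lam $ j"
      by (simp only: vector_matrix_mult_diff_rdistrib vector_matrix_mul_rid)
        (simp add: vector_matrix_mult_def)
    then show ?thesis using spec[OF neg[unfolded neg_vec_def], of j] by linarith
  qed
  have "cmod c * (\<Sum>i\<in>UNIV. lam $ i * a i) = (\<Sum>i\<in>UNIV. lam $ i * (cmod c * a i))"
    by (simp add: sum_distrib_left mult_ac)
  also have "\<dots> \<le> (\<Sum>i\<in>UNIV. lam $ i * (\<Sum>j\<in>UNIV. N $ i $ j * a j))"
    by (intro sum_mono mult_left_mono eig) (simp add: less_imp_le lp)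
  also have "\<dots> = (\<Sum>j\<in>UNIV. (\<Sum>i\<in>UNIV. lam $ i * N $ i $ j) * a j)"
    by (simp only: sum_distrib_left sum_distrib_right mult.assoc) (rule sum.swap)
  also have "\<dots> < (\<Sum>j\<in>UNIV. lam $ j * a j)"
  proof (rule sum_strict_mono_ex1)
    show "\<forall>j\<in>UNIV. (\<Sum>i\<in>UNIV. lam $ i * N $ i $ j) * a j \<le> lam $ j * a j"
      using col by (simp add: a_def less_imp_le mult_right_mono)
    show "\<exists>j\<in>UNIV. (\<Sum>i\<in>UNIV. lam $ i * N $ i $ j) * a j < lam $ j * a j"
      using col j0 by (intro bexI[of _ j0]) (simp_all add: a_def mult_strict_right_mono)
  qed simp
  finally have "cmod c * (\<Sum>i\<in>UNIV. lam $ i * a i) < (\<Sum>i\<in>UNIV. lam $ i * a i)" .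
  moreover have "0 < (\<Sum>i\<in>UNIV. lam $ i * a i)"
    using lp j0 by (intro sum_pos2[where i=j0]) (simp_all add: a_def less_imp_le)
  ultimately show "cmod c < 1" by simp
qed

lemma schur_stable_real_eigenvalue:
  fixes N :: "real^'n::finite^'n"
  assumes "schur_stable N" "N *v z = s *\<^sub>R z" "z \<noteq> 0"
  shows "\<bar>s\<bar> < 1"
proof -
  define v where "v = (\<chi> i. complex_of_real (z $ i))"
  have "v \<noteq> 0" using assms(3) by (auto simp: v_def vec_eq_iff)
  moreover have "(cmat N *v v) $ i = (complex_of_real s *s v) $ i" for i
  proof -
    have "(cmat N *v v) $ i = complex_of_real ((N *v z) $ i)"
      by (simp add: matrix_vector_mult_def cmat_def v_def)
    then show ?thesis using assms(2) by (simp add: v_def)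
  qed
  then have "cmat N *v v = complex_of_real s *s v"
    by (simp add: vec_eq_iff)
  ultimately show ?thesis using assms(1) unfolding schur_stable_def by fastforce
qed

definition prob_simplex :: "(real^'n::finite) set" where
  "prob_simplex = {x. nonneg_vec x \<and> (\<Sum>i\<in>UNIV. x $ i) = 1}"

lemma compact_prob_simplex: "compact prob_simplex"
proof -
  have "norm x \<le> 1" if "x \<in> prob_simplex" for x
  proof -
    have "norm x \<le> (\<Sum>i\<in>UNIV. \<bar>x $ i\<bar>)" by (rule norm_le_l1_cart)
    also have "\<dots> = 1" using that by (simp add: prob_simplex_def nonneg_vec_def)
    finally show ?thesis .
  qed
  then have "bounded (prob_simplex :: (real^'n) set)" by (auto simp: bounded_iff)
  moreover have "closed {x::real^'n. \<forall>i. 0 \<le> x $ i}"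
    by (intro closed_Collect_all closed_Collect_le continuous_intros)
  moreover have "closed {x::real^'n. (\<Sum>i\<in>UNIV. x $ i) = 1}"
    by (intro closed_Collect_eq continuous_intros)
  moreover have "prob_simplex = {x::real^'n. \<forall>i. 0 \<le> x $ i} \<inter> {x. (\<Sum>i\<in>UNIV. x $ i) = 1}"
    by (auto simp: prob_simplex_def nonneg_vec_def)
  ultimately show ?thesis
    using compact_eq_bounded_closed closed_Int by metis
qed

lemma convex_prob_simplex: "convex prob_simplex"
  unfolding convex_def prob_simplex_def nonneg_vec_def
  by (auto simp: sum.distrib sum_distrib_left[symmetric])

text \<open>Brouwer's theorem applied to \<open>x \<mapsto> (\<one> + r N x) / \<Sum>\<^sub>i (\<one> + r N x)\<^sub>i\<close>.\<close>
lemma prob_simplex_fixpoint: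
  fixes N :: "real^'n::finite^'n"
  assumes N: "nonneg_mat N" and r: "0 \<le> r"
  obtains x c where "x \<in> prob_simplex" "(\<chi> i. 1) + r *\<^sub>R (N *v x) = c *\<^sub>R x"
proof -
  define g where "g = (\<lambda>x. (\<chi> i. 1) + r *\<^sub>R (N *v x) :: real^'n)"
  define s where "s = (\<lambda>x. \<Sum>i\<in>UNIV. g x $ i)"
  have g1: "1 \<le> g x $ i" if "x \<in> prob_simplex" for x :: "real^'n" and i
    using that matrix_vector_mult_nonneg[OF N, of x i] r by (simp add: g_def prob_simplex_def)
  have s0: "0 < s x" if "x \<in> prob_simplex" for x :: "real^'n"
    unfolding s_def using g1[OF that] by (intro sum_pos) (auto intro: less_le_trans[of 0 1])
  have cg: "continuous_on prob_simplex g"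
    unfolding g_def
    by (intro continuous_intros continuous_on_subset[OF linear_continuous_on[OF
          matrix_vector_mul_bounded_linear]])
  then have "continuous_on prob_simplex s"
    unfolding s_def by (intro continuous_intros continuous_on_compose2[OF _ cg]) auto
  moreover have "s x \<noteq> 0" if "x \<in> prob_simplex" for x :: "real^'n"
    using s0[OF that] by simp
  ultimately have cont: "continuous_on prob_simplex (\<lambda>x. (1 / s x) *\<^sub>R g x)"
    by (intro continuous_intros cg) auto
  have maps: "(\<lambda>x. (1 / s x) *\<^sub>R g x) \<in> prob_simplex \<rightarrow> prob_simplex"
  proof
    fix x :: "real^'n"
    assume x: "x \<in> prob_simplex"
    have "0 \<le> ((1 / s x) *\<^sub>R g x) $ i" for i
      using g1[OF x, of i] s0[OF x] by simp
    moreover have "(\<Sum>i\<in>UNIV. ((1 / s x) *\<^sub>R g x) $ i) = 1"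
      using s0[OF x] by (simp add: s_def sum_divide_distrib[symmetric])
    ultimately show "(1 / s x) *\<^sub>R g x \<in> prob_simplex"
      by (simp add: prob_simplex_def nonneg_vec_def)
  qed
  have "(\<chi> i. 1 / real CARD('n) :: real^'n) \<in> prob_simplex"
    by (simp add: prob_simplex_def nonneg_vec_def)
  then have "prob_simplex \<noteq> ({} :: (real^'n) set)" by blast
  from brouwer[OF compact_prob_simplex convex_prob_simplex this cont maps]
  obtain x where x: "x \<in> prob_simplex" and fixpoint: "(1 / s x) *\<^sub>R g x = x"
    by blast
  have "g x = s x *\<^sub>R x"
    using arg_cong[OF fixpoint, of "\<lambda>y. s x *\<^sub>R y"] s0[OF x] by simp
  then show ?thesis
    using that[OF x, of "s x"] by (simp add: g_def)
qed

text \<open>The fixed point for the parameter \<open>r\<close> is an approximate eigenvector; were its eigenvalue at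
  most \<open>1\<close>, it would be subinvariant.\<close>
lemma approximate_eigenvector_if_not_subinvariant:
  assumes N: "nonneg_mat N" and no: "\<nexists>lam. pos_vec lam \<and> neg_vec ((N - mat 1) *v lam)"
    and r: "0 < r"
  obtains x \<sigma> where "x \<in> prob_simplex" "1 < \<sigma>" "N *v x = \<sigma> *\<^sub>R x - (1 / r) *\<^sub>R (\<chi> i. 1)"
proof -
  obtain x c where x: "x \<in> prob_simplex" and fixpoint: "(\<chi> i. 1) + r *\<^sub>R (N *v x) = c *\<^sub>R x"
    using prob_simplex_fixpoint[OF N less_imp_le[OF r]] by blast
  have eq: "N *v x = (c / r) *\<^sub>R x - (1 / r) *\<^sub>R (\<chi> i. 1)"
    using arg_cong[OF fixpoint, of "\<lambda>w. (1 / r) *\<^sub>R (w - (\<chi> i. 1))"] r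
    by (simp add: scaleR_diff_right)
  have ge_1: "1 \<le> c * x $ i" for i
  proof -
    have "0 \<le> r * (N *v x) $ i"
      using matrix_vector_mult_nonneg[OF N, of x i] r x by (simp add: prob_simplex_def)
    moreover have "1 + r * (N *v x) $ i = c * x $ i"
      using arg_cong[OF fixpoint, of "\<lambda>w. w $ i"] by simp
    ultimately show ?thesis by linarith
  qed
  have pos: "pos_vec x"
    unfolding pos_vec_def
  proof
    fix i
    have "x $ i \<noteq> 0" using ge_1[of i] by auto
    moreover have "0 \<le> x $ i" using x by (simp add: prob_simplex_def nonneg_vec_def)
    ultimately show "0 < x $ i" by simp
  qed
  have "1 < c / r"
  proof (rule ccontr)
    assume "\<not> 1 < c / r"
    have "((N - mat 1) *v x) $ i < 0" for i
    proof -
      have "((N - mat 1) *v x) $ i = (c / r - 1) * x $ i - 1 / r"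
        by (simp add: matrix_vector_mult_diff_rdistrib eq algebra_simps)
      moreover have "(c / r - 1) * x $ i \<le> 0"
        using \<open>\<not> 1 < c / r\<close> pos unfolding pos_vec_def
        by (intro mult_nonpos_nonneg) (simp_all add: less_imp_le)
      moreover have "0 < 1 / r" using r by simp
      ultimately show ?thesis by linarith
    qed
    then show False using no pos by (auto simp: neg_vec_def)
  qed
  then show ?thesis using that x eq by blast
qed

lemma eigenvector_if_approximate_eigenvectors:
  fixes N :: "real^'n::finite^'n"
  assumes x: "\<And>m. x m \<in> prob_simplex" and \<sigma>: "\<And>m. 1 \<le> \<sigma> m" and e: "e \<longlonglongrightarrow> 0"
    and eq: "\<And>m. N *v x m = \<sigma> m *\<^sub>R x m - e m *\<^sub>R (\<chi> i. 1)"
  shows "\<exists>z s. z \<noteq> 0 \<and> 1 \<le> s \<and> N *v z = s *\<^sub>R z"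
proof -
  have \<sigma>_eq: "\<sigma> m = (\<Sum>i\<in>UNIV. (N *v x m) $ i) + real CARD('n) * e m" for m
  proof -
    have "(\<Sum>i\<in>UNIV. (N *v x m) $ i) = \<sigma> m * (\<Sum>i\<in>UNIV. x m $ i) - real CARD('n) * e m"
      by (simp add: eq sum_subtractf sum_distrib_left)
    then show ?thesis using x[of m] by (simp add: prob_simplex_def)
  qed
  obtain z h where z: "z \<in> prob_simplex" and h: "strict_mono h" and lim: "(x \<circ> h) \<longlonglongrightarrow> z"
    using compact_prob_simplex[unfolded compact_def, rule_format, of x] x by blast
  from LIMSEQ_subseq_LIMSEQ[OF e h] have e_h: "(\<lambda>j. e (h j)) \<longlonglongrightarrow> 0"
    by (simp add: o_def)
  have limN: "(\<lambda>j. N *v x (h j)) \<longlonglongrightarrow> N *v z"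
    using lim by (intro bounded_linear.tendsto[OF matrix_vector_mul_bounded_linear]) (simp add: o_def)
  define s where "s = (\<Sum>i\<in>UNIV. (N *v z) $ i)"
  have lim\<sigma>: "(\<lambda>j. \<sigma> (h j)) \<longlonglongrightarrow> s"
    unfolding \<sigma>_eq s_def
    using tendsto_add[OF tendsto_sum[OF tendsto_vec_nth[OF limN]] tendsto_mult_right_zero[OF e_h]]
    by simp
  have "(\<lambda>j. \<sigma> (h j) *\<^sub>R x (h j) - e (h j) *\<^sub>R (\<chi> i. 1)) \<longlonglongrightarrow> s *\<^sub>R z - 0 *\<^sub>R (\<chi> i. 1)"
    using lim by (intro tendsto_intros lim\<sigma> e_h) (simp add: o_def)
  then have "N *v z = s *\<^sub>R z"
    using LIMSEQ_unique[OF limN] by (simp add: eq)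
  moreover have "1 \<le> s"
    using lim\<sigma> by (rule tendsto_lowerbound) (simp_all add: \<sigma>)
  moreover have "z \<noteq> 0" using z by (auto simp: prob_simplex_def)
  ultimately show ?thesis by blast
qed

lemma eigenvalue_ge_1_if_not_subinvariant:
  fixes N :: "real^'n::finite^'n"
  assumes N: "nonneg_mat N" and no: "\<nexists>lam. pos_vec lam \<and> neg_vec ((N - mat 1) *v lam)"
  obtains z s where "z \<noteq> 0" "1 \<le> s" "N *v z = s *\<^sub>R z"
proof -
  have "\<forall>m. \<exists>x \<sigma>. x \<in> prob_simplex \<and> 1 < \<sigma> \<and>
      N *v x = \<sigma> *\<^sub>R x - (1 / (real m + 1)) *\<^sub>R (\<chi> i. 1)"
  proof
    fix m :: nat
    obtain x \<sigma> where "x \<in> prob_simplex" "1 < \<sigma>"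
      "N *v x = \<sigma> *\<^sub>R x - (1 / (real m + 1)) *\<^sub>R (\<chi> i. 1)"
      using approximate_eigenvector_if_not_subinvariant[OF N no, of "real m + 1"] by auto
    then show "\<exists>x \<sigma>. x \<in> prob_simplex \<and> 1 < \<sigma> \<and>
        N *v x = \<sigma> *\<^sub>R x - (1 / (real m + 1)) *\<^sub>R (\<chi> i. 1)" by blast
  qed
  from choice[OF this] obtain x where "\<forall>m. \<exists>\<sigma>. x m \<in> prob_simplex \<and> 1 < \<sigma> \<and>
      N *v x m = \<sigma> *\<^sub>R x m - (1 / (real m + 1)) *\<^sub>R (\<chi> i. 1)"
    by blast
  from choice[OF this] obtain \<sigma> where approx: "\<forall>m. x m \<in> prob_simplex \<and> 1 < \<sigma> m \<and>
      N *v x m = \<sigma> m *\<^sub>R x m - (1 / (real m + 1)) *\<^sub>R (\<chi> i. 1)"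
    by blast
  have "(\<lambda>m. 1 / (real m + 1)) \<longlonglongrightarrow> 0"
    using LIMSEQ_inverse_real_of_nat by (simp add: inverse_eq_divide add.commute)
  with approx have "\<exists>z s. z \<noteq> 0 \<and> 1 \<le> s \<and> N *v z = s *\<^sub>R z"
    by (intro eigenvector_if_approximate_eigenvectors[of x \<sigma> "\<lambda>m. 1 / (real m + 1)"])
      (simp_all add: less_imp_le)
  then show ?thesis using that by blast
qed

lemma nonneg_schur_stable_iff_matpow_vanishes:
  fixes N :: "real^'n::finite^'n"
  assumes N: "nonneg_mat N"
  shows "schur_stable N \<longleftrightarrow> matpow_vanishes N"
proof
  assume "schur_stable N"
  have "\<exists>lam. pos_vec lam \<and> neg_vec ((N - mat 1) *v lam)"
  proof (rule ccontr)
    assume "\<nexists>lam. pos_vec lam \<and> neg_vec ((N - mat 1) *v lam)"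
    then obtain z s where "z \<noteq> 0" "1 \<le> s" "N *v z = s *\<^sub>R z"
      using eigenvalue_ge_1_if_not_subinvariant[OF N] by blast
    with schur_stable_real_eigenvalue[OF \<open>schur_stable N\<close>] show False by fastforce
  qed
  then show "matpow_vanishes N"
    using nonneg_matpow_vanishes_iff_subinvariant[OF N] by blast
next
  assume "matpow_vanishes N"
  then show "schur_stable N"
    using nonneg_matpow_vanishes_iff_row_subinvariant[OF N] schur_stable_if_row_subinvariant[OF N]
    by blast
qed

section \<open>Trajectories of the impulsive system\<close>

lemma has_vector_derivative_mexp_mult_vec:
  "((\<lambda>t. mexp ((t - c) *\<^sub>R A) *v w) has_vector_derivative A *v (mexp ((t - c) *\<^sub>R A) *v w))
     (at t within S)"
proof -
  have "((\<lambda>t. mexp ((t - c) *\<^sub>R A)) has_vector_derivative 1 *\<^sub>R (mexp ((t - c) *\<^sub>R A) ** A))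
      (at t within S)"
    by (rule has_vector_derivative_mexp_comp) (auto intro!: derivative_eq_intros)
  from bounded_linear.has_vector_derivative[OF
      bounded_bilinear.bounded_linear_left[OF bounded_bilinear_matrix_vector_mult] this]
  show ?thesis by (simp add: mexp_commute matrix_vector_mul_assoc)
qed

text \<open>\<open>mexp ((a - t) A) x(t)\<close> has zero derivative, so it is constant, equal to its limit \<open>w\<close> at \<open>a\<close>.\<close>
lemma linear_ode_solution_eq_interior:
  fixes A :: "real^'n::finite^'n" and x :: "real \<Rightarrow> real^'n"
  assumes ode: "\<forall>t\<in>{a<..<b}. (x has_vector_derivative (A *v x t)) (at t)"
    and lim: "(x \<longlongrightarrow> w) (at_right a)"
    and s: "s \<in> {a<..<b}"
  shows "x s = mexp ((s - a) *\<^sub>R A) *v w"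
proof -
  define g where "g = (\<lambda>t. mexp ((a - t) *\<^sub>R A) *v x t)"
  have "(g has_derivative (\<lambda>h. 0)) (at t within {a<..<b})" if t: "t \<in> {a<..<b}" for t
  proof -
    have "((\<lambda>t. mexp ((a - t) *\<^sub>R A)) has_vector_derivative (-1) *\<^sub>R (mexp ((a - t) *\<^sub>R A) ** A))
        (at t within {a<..<b})"
      by (rule has_vector_derivative_mexp_comp) (auto intro!: derivative_eq_intros)
    from bounded_bilinear.has_vector_derivative[OF bounded_bilinear_matrix_vector_mult this
        has_vector_derivative_at_within[OF ode[rule_format, OF t]]]
    show ?thesis
      by (simp add: g_def has_vector_derivative_def matrix_vector_mul_assoc
          matrix_vector_mult_uminus_left)
  qed
  then obtain c where c: "\<forall>t\<in>{a<..<b}. g t = c"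
    using has_derivative_zero_constant[of "{a<..<b}" g] by auto
  have "continuous (at a within {a<..}) (\<lambda>t. mexp ((a - t) *\<^sub>R A))"
    by (rule continuous_mexp_comp) (intro continuous_intros)
  then have "((\<lambda>t. mexp ((a - t) *\<^sub>R A)) \<longlongrightarrow> mat 1) (at_right a)"
    by (simp add: continuous_within mexp_zero)
  from bounded_bilinear.tendsto[OF bounded_bilinear_matrix_vector_mult this lim]
  have lim_w: "(g \<longlongrightarrow> w) (at_right a)"
    by (simp add: g_def)
  have "(g \<longlongrightarrow> c) (at_right a)"
    using s c by (intro tendsto_eventually) (auto simp: eventually_at_right_field intro!: exI[of _ b])
  with lim_w have "c = w"
    using tendsto_unique[OF trivial_limit_at_right_real] by blast
  have "x s = mexp ((s - a) *\<^sub>R A) *v g s"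
    using mexp_inverse(1)[of "s - a" A] by (simp add: g_def matrix_vector_mul_assoc)
  then show ?thesis using c s \<open>c = w\<close> by simp
qed

lemma linear_ode_solution_eq:
  fixes A :: "real^'n::finite^'n" and x :: "real \<Rightarrow> real^'n"
  assumes ab: "a < b" and cont: "continuous_on {a<..b} x"
    and ode: "\<forall>t\<in>{a<..<b}. (x has_vector_derivative (A *v x t)) (at t)"
    and lim: "(x \<longlongrightarrow> w) (at_right a)"
    and t: "t \<in> {a<..b}"
  shows "x t = mexp ((t - a) *\<^sub>R A) *v w"
proof -
  note interior = linear_ode_solution_eq_interior[OF ode lim]
  have "x b = mexp ((b - a) *\<^sub>R A) *v w"
  proof (rule tendsto_unique[OF trivial_limit_at_left_real])
    have "at b within {a<..b} = at_left b"
      by (rule at_within_nhd[of _ "{a<..<b+1}"]) (use ab in auto)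
    moreover have "(x \<longlongrightarrow> x b) (at b within {a<..b})"
      using cont ab by (simp add: continuous_on_def)
    ultimately show "(x \<longlongrightarrow> x b) (at_left b)" by simp
    have "continuous (at b within {..<b}) (\<lambda>s. mexp ((s - a) *\<^sub>R A))"
      by (rule continuous_mexp_comp) (intro continuous_intros)
    then have "((\<lambda>s. mexp ((s - a) *\<^sub>R A)) \<longlongrightarrow> mexp ((b - a) *\<^sub>R A)) (at_left b)"
      by (simp add: continuous_within)
    from bounded_bilinear.tendsto[OF bounded_bilinear_matrix_vector_mult this tendsto_const]
    have "((\<lambda>s. mexp ((s - a) *\<^sub>R A) *v w) \<longlongrightarrow> mexp ((b - a) *\<^sub>R A) *v w) (at_left b)" .
    moreover have "\<forall>\<^sub>F s in at_left b. mexp ((s - a) *\<^sub>R A) *v w = x s"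
      using ab interior by (auto simp: eventually_at_left_field intro!: exI[of _ a])
    ultimately show "(x \<longlongrightarrow> mexp ((b - a) *\<^sub>R A) *v w) (at_left b)"
      by (rule Lim_transform_eventually)
  qed
  then show ?thesis using interior t by (cases "t = b") auto
qed

lemma dwell_interval_index:
  assumes T: "(0::real) < T" and t: "t0 < t"
  obtains k where "t0 + real k * T < t" "t \<le> t0 + real (Suc k) * T"
proof -
  define q where "q = (t - t0) / T"
  define k where "k = nat \<lceil>q\<rceil> - 1"
  have "0 < q" using T t by (simp add: q_def)
  then have "real (Suc k) = of_int \<lceil>q\<rceil>"
    by (simp add: k_def)
  then have "real k < q" "q \<le> real (Suc k)"
    using ceiling_correct[of q] by simp_all
  then show ?thesis
    using that T by (simp add: q_def less_divide_eq divide_le_eq algebra_simps)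
qed

lemma dwell_interval_ceiling:
  assumes "(0::real) < T" "real k * T < t" "t \<le> real (Suc k) * T"
  shows "nat \<lceil>t / T\<rceil> - 1 = k"
proof -
  have "\<lceil>t / T\<rceil> = int (Suc k)"
    unfolding ceiling_eq_iff using assms by (simp add: less_divide_eq divide_le_eq algebra_simps)
  then show ?thesis by simp
qed

lemma impulsive_solution_eq:
  fixes A J :: "real^'n::finite^'n"
  assumes T: "0 < T" and sol: "impulsive_solution A J T t0 x0 x"
    and t: "t0 + real k * T < t" "t \<le> t0 + real (Suc k) * T"
  shows "x t = mexp ((t - (t0 + real k * T)) *\<^sub>R A) *v (J *v (matpow (mexp (T *\<^sub>R A) ** J) k *v x0))"
proof -
  have interval: "x t = mexp ((t - (t0 + real k * T)) *\<^sub>R A) *v (J *v x (t0 + real k * T))"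
    if "t0 + real k * T < t" "t \<le> t0 + real (Suc k) * T" for k t
    using sol T that unfolding impulsive_solution_def Let_def
    by (intro linear_ode_solution_eq[where b = "t0 + real (Suc k) * T"]) auto
  have "x (t0 + real k * T) = matpow (mexp (T *\<^sub>R A) ** J) k *v x0" for k
  proof (induction k)
    case (Suc k)
    have "t0 + real (Suc k) * T - (t0 + real k * T) = T" by (simp add: algebra_simps)
    then show ?case
      using interval[of k "t0 + real (Suc k) * T"] T Suc.IH
      by (simp add: matrix_vector_mul_assoc matrix_mul_assoc)
  qed (use sol in \<open>simp add: impulsive_solution_def\<close>)
  then show ?thesis using interval[OF t] by simp
qed

lemma norm_matrix_vector_mult_le: "norm (B *v v) \<le> norm (linop_of_mat B) * norm v"
  using norm_linop_apply[of "linop_of_mat B" v] by simp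

lemma impulsive_solution_norm_le:
  fixes A J :: "real^'n::finite^'n" and T :: real
  defines "C \<equiv> exp (T * norm (linop_of_mat A)) * norm (linop_of_mat J)"
  assumes T: "0 < T" and sol: "impulsive_solution A J T t0 x0 x"
    and t: "t0 + real k * T < t" "t \<le> t0 + real (Suc k) * T"
  shows "norm (x t) \<le> C * norm (linop_of_mat (matpow (mexp (T *\<^sub>R A) ** J) k)) * norm x0"
proof -
  define s where "s = t - (t0 + real k * T)"
  define P where "P = mexp (T *\<^sub>R A) ** J"
  have s: "0 \<le> s" "s \<le> T"
    using t by (simp_all add: s_def algebra_simps)
  have "norm (linop_of_mat (mexp (s *\<^sub>R A))) \<le> exp (norm (s *\<^sub>R linop_of_mat A))"
    unfolding linop_of_mexp linop_of_mat_scaleR by (rule norm_exp)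
  also have "\<dots> \<le> exp (T * norm (linop_of_mat A))"
    using s by (simp add: mult_right_mono)
  finally have E: "norm (linop_of_mat (mexp (s *\<^sub>R A))) \<le> exp (T * norm (linop_of_mat A))" .
  have "norm (x t) \<le> norm (linop_of_mat (mexp (s *\<^sub>R A))) * norm (J *v (matpow P k *v x0))"
    unfolding impulsive_solution_eq[OF T sol t] s_def[symmetric] P_def[symmetric]
    by (rule norm_matrix_vector_mult_le)
  also have "\<dots> \<le> exp (T * norm (linop_of_mat A)) *
      (norm (linop_of_mat J) * (norm (linop_of_mat (matpow P k)) * norm x0))"
    by (intro mult_mono E order.trans[OF norm_matrix_vector_mult_le] mult_left_mono
        norm_matrix_vector_mult_le) simp_all
  finally show ?thesis by (simp add: C_def P_def mult_ac)
qed

lemma impulsive_solution_decay: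
  fixes A J :: "real^'n::finite^'n"
  assumes T: "0 < T" and Z: "matpow_vanishes (mexp (T *\<^sub>R A) ** J)"
  obtains p where "p \<longlonglongrightarrow> 0"
    "\<And>t0 x0 x t k. impulsive_solution A J T t0 x0 x \<Longrightarrow>
      t0 + real k * T < t \<Longrightarrow> t \<le> t0 + real (Suc k) * T \<Longrightarrow> norm (x t) \<le> p k * norm x0"
proof
  define P where "P = mexp (T *\<^sub>R A) ** J"
  define C where "C = exp (T * norm (linop_of_mat A)) * norm (linop_of_mat J)"
  have "(\<lambda>k. norm (linop_of_mat P ^ k)) \<longlonglongrightarrow> 0"
    using Z unfolding P_def matpow_vanishes_iff_linop by (rule tendsto_norm_zero)
  from tendsto_mult_right_zero[OF this, of C]
  show "(\<lambda>k. C * norm (linop_of_mat (matpow P k))) \<longlonglongrightarrow> 0"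
    by (simp add: linop_of_matpow)
  show "norm (x t) \<le> C * norm (linop_of_mat (matpow P k)) * norm x0"
    if "impulsive_solution A J T t0 x0 x" "t0 + real k * T < t" "t \<le> t0 + real (Suc k) * T"
    for t0 x0 x t k
    using impulsive_solution_norm_le[OF T that] by (simp add: C_def P_def)
qed

lemma norm_le_if_dwell_bound:
  fixes x :: "real \<Rightarrow> 'a::real_normed_vector"
  assumes T: "0 < T" and x0: "x t0 = x0" and B: "\<And>k. p k \<le> B" "0 \<le> B"
    and bound: "\<And>k t. t0 + real k * T < t \<Longrightarrow> t \<le> t0 + real (Suc k) * T \<Longrightarrow>
      norm (x t) \<le> p k * norm x0"
    and t: "t0 \<le> t"
  shows "norm (x t) \<le> (1 + B) * norm x0"
proof (cases "t = t0")
  case True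
  then show ?thesis
    using x0 B mult_right_mono[of 1 "1 + B" "norm x0"] by simp
next
  case False
  with t have "t0 < t" by simp
  then obtain k where k: "t0 + real k * T < t" "t \<le> t0 + real (Suc k) * T"
    by (rule dwell_interval_index[OF T])
  have "p k \<le> 1 + B" using B(1)[of k] by simp
  then show ?thesis
    using bound[OF k] mult_right_mono[of "p k" "1 + B" "norm x0"] by simp
qed

lemma tendsto_zero_if_dwell_bound:
  fixes x :: "real \<Rightarrow> 'a::real_normed_vector"
  assumes T: "0 < T" and p: "p \<longlonglongrightarrow> 0"
    and bound: "\<And>k t. t0 + real k * T < t \<Longrightarrow> t \<le> t0 + real (Suc k) * T \<Longrightarrow>
      norm (x t) \<le> p k * norm x0"
  shows "(x \<longlongrightarrow> 0) at_top"
  unfolding tendsto_iff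
proof (intro allI impI)
  fix \<epsilon> :: real
  assume "0 < \<epsilon>"
  with tendsto_mult_left_zero[OF p, of "norm x0"]
  have "\<forall>\<^sub>F k in sequentially. p k * norm x0 < \<epsilon>"
    by (rule order_tendstoD(2))
  then obtain K where K: "\<And>k. K \<le> k \<Longrightarrow> p k * norm x0 < \<epsilon>"
    by (auto simp: eventually_sequentially)
  have "dist (x t) 0 < \<epsilon>" if t: "t0 + real K * T + 1 \<le> t" for t
  proof -
    have "0 \<le> real K * T" using T by simp
    with t have "t0 < t" by linarith
    then obtain k where k: "t0 + real k * T < t" "t \<le> t0 + real (Suc k) * T"
      by (rule dwell_interval_index[OF T])
    then have "real K * T < real (Suc k) * T" using t by linarith
    then have "K \<le> k" using T by (simp add: mult_less_cancel_right)
    then show ?thesis using bound[OF k] K[of k] by simp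
  qed
  then show "\<forall>\<^sub>F t in at_top. dist (x t) 0 < \<epsilon>"
    unfolding eventually_at_top_linorder by blast
qed

lemma gas_const_dwell_if_matpow_vanishes:
  fixes A J :: "real^'n::finite^'n"
  assumes T: "0 < T" and Z: "matpow_vanishes (mexp (T *\<^sub>R A) ** J)"
  shows "gas_const_dwell A J T"
proof -
  obtain p where p: "p \<longlonglongrightarrow> 0" and bound: "\<And>t0 x0 x t k. impulsive_solution A J T t0 x0 x \<Longrightarrow>
      t0 + real k * T < t \<Longrightarrow> t \<le> t0 + real (Suc k) * T \<Longrightarrow> norm (x t) \<le> p k * norm x0"
    using impulsive_solution_decay[OF T Z] by blast
  obtain B where B: "0 < B" "\<And>k. norm (p k) \<le> B"
    using BseqE[OF convergent_imp_Bseq[OF convergentI[OF p]]] by blast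
  have pB: "p k \<le> B" for k using B(2)[of k] by simp
  have stable: "norm (x t) < \<epsilon>"
    if sol: "impulsive_solution A J T t0 x0 x" and x0: "norm x0 < \<epsilon> / (1 + B)" and t: "t0 \<le> t"
    for t0 x0 x t \<epsilon>
  proof -
    have "norm (x t) \<le> (1 + B) * norm x0"
      by (rule norm_le_if_dwell_bound[OF T _ pB _ bound[OF sol] t])
        (use sol B(1) in \<open>simp_all add: impulsive_solution_def\<close>)
    then show ?thesis
      using x0 B(1) by (simp add: pos_less_divide_eq mult.commute)
  qed
  show ?thesis
    unfolding gas_const_dwell_def
  proof (intro allI conjI impI)
    show "\<exists>\<delta>>0. \<forall>x0 x. impulsive_solution A J T t0 x0 x \<and> norm x0 < \<delta> \<longrightarrow>
        (\<forall>t\<ge>t0. norm (x t) < \<epsilon>)" if "0 < \<epsilon>" for t0 \<epsilon> :: real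
      using that B(1) stable by (intro exI[of _ "\<epsilon> / (1 + B)"]) auto
    show "(x \<longlongrightarrow> 0) at_top" if "impulsive_solution A J T t0 x0 x" for t0 x0 x
      by (rule tendsto_zero_if_dwell_bound[OF T p bound[OF that]])
  qed
qed

lemma impulsive_solution_if_piecewise:
  fixes A J :: "real^'n::finite^'n"
  assumes T: "0 < T" and x0: "x 0 = x0"
    and F_deriv: "\<And>k t S. (F k has_vector_derivative A *v F k t) (at t within S)"
    and F_start: "\<And>k. F k (real k * T) = J *v x (real k * T)"
    and xF: "\<And>k t. real k * T < t \<Longrightarrow> t \<le> real (Suc k) * T \<Longrightarrow> x t = F k t"
  shows "impulsive_solution A J T 0 x0 x"
  unfolding impulsive_solution_def Let_def
proof (intro conjI allI)
  fix k
  have eq: "x t = F k t" if "t \<in> {real k * T<..real (Suc k) * T}" for t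
    using xF that by simp
  have "continuous_on {real k * T<..real (Suc k) * T} (F k)"
    using F_deriv by (auto intro!: continuous_at_imp_continuous_on has_vector_derivative_continuous)
  then have "continuous_on {real k * T<..real (Suc k) * T} x"
    by (rule continuous_on_eq) (simp add: eq)
  then show "continuous_on {0 + real k * T<..0 + real (Suc k) * T} x" by simp
  show "\<forall>t\<in>{0 + real k * T<..<0 + real (Suc k) * T}. (x has_vector_derivative A *v x t) (at t)"
  proof
    fix t
    assume "t \<in> {0 + real k * T<..<0 + real (Suc k) * T}"
    then have t: "t \<in> {real k * T<..<real (Suc k) * T}" by simp
    have "(x has_vector_derivative A *v F k t) (at t)"
      by (rule has_vector_derivative_transform_within_open[OF F_deriv _ t]) (simp_all add: eq)
    then show "(x has_vector_derivative A *v x t) (at t)" using t eq by simp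
  qed
  have "(F k \<longlongrightarrow> F k (real k * T)) (at_right (real k * T))"
    using has_vector_derivative_continuous[OF F_deriv] by (simp add: continuous_within)
  moreover have "\<forall>\<^sub>F t in at_right (real k * T). F k t = x t"
    using T eq by (auto simp: eventually_at_right_field intro!: exI[of _ "real (Suc k) * T"])
  ultimately show "(x \<longlongrightarrow> J *v x (0 + real k * T)) (at_right (0 + real k * T))"
    by (simp add: Lim_transform_eventually F_start)
qed (rule x0)

text \<open>On \<open>(kT, (k+1)T]\<close> the trajectory from \<open>t\<^sub>0 = 0\<close> is the flow of \<open>A\<close> started at \<open>J P\<^sup>k x\<^sub>0\<close>.\<close>
lemma impulsive_solution_exists:
  fixes A J :: "real^'n::finite^'n"
  assumes T: "0 < T"
  obtains x where "impulsive_solution A J T 0 x0 x"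
    "\<And>k. x (real k * T) = matpow (mexp (T *\<^sub>R A) ** J) k *v x0"
proof -
  define P where "P = mexp (T *\<^sub>R A) ** J"
  define F where "F = (\<lambda>k t. mexp ((t - real k * T) *\<^sub>R A) *v (J *v (matpow P k *v x0)))"
  define x where "x = (\<lambda>t. if t \<le> 0 then x0 else F (nat \<lceil>t / T\<rceil> - 1) t)"
  have xF: "x t = F k t" if "real k * T < t" "t \<le> real (Suc k) * T" for k t
  proof -
    have "nat \<lceil>t / T\<rceil> - 1 = k"
      using T that by (rule dwell_interval_ceiling)
    moreover have "0 < t"
      using that T mult_nonneg_nonneg[of "real k" T] by linarith
    ultimately show ?thesis by (simp add: x_def)
  qed
  have x_kT: "x (real k * T) = matpow P k *v x0" for k
  proof (cases k)
    case (Suc m)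
    then have "x (real k * T) = F m (real k * T)" using xF[of m "real k * T"] T by simp
    then show ?thesis
      using Suc by (simp add: F_def algebra_simps P_def matrix_vector_mul_assoc matrix_mul_assoc)
  qed (simp add: x_def)
  have "impulsive_solution A J T 0 x0 x"
  proof (rule impulsive_solution_if_piecewise[OF T _ _ _ xF])
    show "(F k has_vector_derivative A *v F k t) (at t within S)" for k t S
      unfolding F_def by (rule has_vector_derivative_mexp_mult_vec)
    show "F k (real k * T) = J *v x (real k * T)" for k
      by (simp add: F_def x_kT mexp_zero)
  qed (simp add: x_def)
  then show ?thesis using that x_kT unfolding P_def by blast
qed

lemma matpow_vanishes_if_gas_const_dwell:
  fixes A J :: "real^'n::finite^'n"
  assumes T: "0 < T" and G: "gas_const_dwell A J T"
  shows "matpow_vanishes (mexp (T *\<^sub>R A) ** J)"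
proof -
  define P where "P = mexp (T *\<^sub>R A) ** J"
  have conv: "(\<lambda>k. matpow P k *v x0) \<longlonglongrightarrow> 0" for x0
  proof -
    obtain x where sol: "impulsive_solution A J T 0 x0 x"
      and x_kT: "\<And>k. x (real k * T) = matpow P k *v x0"
      using impulsive_solution_exists[OF T] unfolding P_def by metis
    have "(x \<longlongrightarrow> 0) at_top" using G sol unfolding gas_const_dwell_def by blast
    moreover have "filterlim (\<lambda>k. real k * T) at_top sequentially"
      using T by (intro filterlim_at_top_mult_tendsto_pos[OF tendsto_const] filterlim_real_sequentially)
    ultimately show ?thesis
      using filterlim_compose[of x "nhds 0" at_top] by (simp add: x_kT[symmetric])
  qed
  have "(\<lambda>k. matpow P k $ i $ j) \<longlonglongrightarrow> 0" for i j
    using tendsto_vec_nth[OF conv[of "axis j 1"], of i] by (simp add: matrix_vector_mult_axis)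
  then show ?thesis
    unfolding matpow_vanishes_def P_def[symmetric] by (auto intro!: vec_tendstoI)
qed

lemma gas_const_dwell_iff_matpow_vanishes:
  fixes A J :: "real^'n::finite^'n"
  assumes "0 < T"
  shows "gas_const_dwell A J T \<longleftrightarrow> matpow_vanishes (J ** mexp (T *\<^sub>R A))"
  using gas_const_dwell_if_matpow_vanishes[OF assms] matpow_vanishes_if_gas_const_dwell[OF assms]
    matpow_vanishes_mult_commute[of "mexp (T *\<^sub>R A)" J]
  by blast

section \<open>Linear copositive Lyapunov certificates\<close>

lemma lyapunov_decrease_iff_row_subinvariant:
  fixes M :: "real^'n::finite^'n"
  shows "(\<exists>lam mu. pos_vec lam \<and> pos_vec mu \<and>
            (\<forall>x. nonneg_vec x \<longrightarrow> lam \<bullet> (M *v x) - lam \<bullet> x \<le> - (mu \<bullet> x))) \<longleftrightarrow>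
         (\<exists>lam. pos_vec lam \<and> neg_vec (lam v* (M - mat 1)))"
proof -
  have decrease: "lam \<bullet> (M *v x) - lam \<bullet> x = (lam v* (M - mat 1)) \<bullet> x" for lam x
    by (simp add: dot_lmul_matrix vector_matrix_mult_diff_rdistrib inner_diff_left)
  show ?thesis
  proof
    assume "\<exists>lam mu. pos_vec lam \<and> pos_vec mu \<and>
      (\<forall>x. nonneg_vec x \<longrightarrow> lam \<bullet> (M *v x) - lam \<bullet> x \<le> - (mu \<bullet> x))"
    then obtain lam mu where lam: "pos_vec lam" and mu: "pos_vec mu"
      and V: "\<forall>x. nonneg_vec x \<longrightarrow> lam \<bullet> (M *v x) - lam \<bullet> x \<le> - (mu \<bullet> x)"
      by blast
    have "(lam v* (M - mat 1)) $ j < 0" for j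
    proof -
      have "nonneg_vec (axis j (1::real))" by (simp add: nonneg_vec_def axis_def)
      from V[rule_format, OF this]
      have "(lam v* (M - mat 1)) \<bullet> axis j 1 \<le> - (mu \<bullet> axis j 1)"
        by (simp only: decrease)
      then have "(lam v* (M - mat 1)) $ j \<le> - mu $ j"
        by (simp add: inner_axis)
      moreover have "0 < mu $ j" using mu by (simp add: pos_vec_def)
      ultimately show ?thesis by linarith
    qed
    then show "\<exists>lam. pos_vec lam \<and> neg_vec (lam v* (M - mat 1))"
      using lam by (auto simp: neg_vec_def)
  next
    assume "\<exists>lam. pos_vec lam \<and> neg_vec (lam v* (M - mat 1))"
    then obtain lam where "pos_vec lam" "neg_vec (lam v* (M - mat 1))" by blast
    then show "\<exists>lam mu. pos_vec lam \<and> pos_vec mu \<and>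
      (\<forall>x. nonneg_vec x \<longrightarrow> lam \<bullet> (M *v x) - lam \<bullet> x \<le> - (mu \<bullet> x))"
      by (intro exI[of _ lam] exI[of _ "- (lam v* (M - mat 1))"])
        (simp add: decrease pos_vec_def neg_vec_def)
  qed
qed

lemma has_vector_derivative_reflect_interval:
  assumes "\<forall>\<tau>\<in>{0..T}. (z has_vector_derivative z' \<tau>) (at \<tau> within {0..T})" "\<tau> \<in> {0..T}"
  shows "((\<lambda>\<tau>. z (T - \<tau>)) has_vector_derivative - z' (T - \<tau>)) (at \<tau> within {0..(T::real)})"
proof -
  have "(\<lambda>\<tau>. T - \<tau>) ` {0..T} = {0..T}"
    by (auto simp: image_iff intro!: bexI[of _ "T - _"])
  then have "(z has_vector_derivative z' (T - \<tau>)) (at (T - \<tau>) within (\<lambda>\<tau>. T - \<tau>) ` {0..T})"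
    using assms by auto
  moreover have "((\<lambda>\<tau>. T - \<tau>) has_vector_derivative -1) (at \<tau> within {0..T})"
    by (auto intro!: derivative_eq_intros)
  ultimately show ?thesis
    using vector_diff_chain_within[of "\<lambda>\<tau>. T - \<tau>" "-1" \<tau> "{0..T}" z] by (simp add: o_def)
qed

text \<open>Condition (e) and condition (f) correspond under the time reversal \<open>\<xi>(\<tau>) = \<zeta>(T - \<tau>)\<close>.\<close>
lemma zeta_certificate_iff_xi_certificate:
  fixes A J :: "real^'n::finite^'n"
  shows "(\<exists>\<zeta> \<zeta>' \<epsilon>.
          (\<forall>\<tau>\<in>{0..T}. (\<zeta> has_vector_derivative \<zeta>' \<tau>) (at \<tau> within {0..T})) \<and>
          pos_vec (\<zeta> T) \<and> \<epsilon> > (0::real) \<and>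
          (\<forall>\<tau>\<in>{0..T}. nonpos_vec (\<zeta> \<tau> v* A - \<zeta>' \<tau>)) \<and>
          nonpos_vec (\<zeta> T v* J - \<zeta> 0 + \<epsilon> *\<^sub>R (\<chi> i. 1))) \<longleftrightarrow>
       (\<exists>\<xi> \<xi>' \<epsilon>.
          (\<forall>\<tau>\<in>{0..T}. (\<xi> has_vector_derivative \<xi>' \<tau>) (at \<tau> within {0..T})) \<and>
          pos_vec (\<xi> 0) \<and> \<epsilon> > (0::real) \<and>
          (\<forall>\<tau>\<in>{0..T}. nonpos_vec (\<xi> \<tau> v* A + \<xi>' \<tau>)) \<and>
          nonpos_vec (\<xi> 0 v* J - \<xi> T + \<epsilon> *\<^sub>R (\<chi> i. 1)))"
  (is "?E \<longleftrightarrow> ?F")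
proof
  assume ?E
  then obtain z z' e where d: "\<forall>\<tau>\<in>{0..T}. (z has_vector_derivative z' \<tau>) (at \<tau> within {0..T})"
    and p: "pos_vec (z T)" and e: "e > 0" and c: "\<forall>\<tau>\<in>{0..T}. nonpos_vec (z \<tau> v* A - z' \<tau>)"
    and b: "nonpos_vec (z T v* J - z 0 + e *\<^sub>R (\<chi> i. 1))" by blast
  have "\<forall>\<tau>\<in>{0..T}. nonpos_vec (z (T - \<tau>) v* A + - z' (T - \<tau>))"
    using c by auto
  then show ?F
    using has_vector_derivative_reflect_interval[OF d] p e b
    by (intro exI[of _ "\<lambda>\<tau>. z (T - \<tau>)"] exI[of _ "\<lambda>\<tau>. - z' (T - \<tau>)"] exI[of _ e]) simp
next
  assume ?F
  then obtain z z' e where d: "\<forall>\<tau>\<in>{0..T}. (z has_vector_derivative z' \<tau>) (at \<tau> within {0..T})"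
    and p: "pos_vec (z 0)" and e: "e > 0" and c: "\<forall>\<tau>\<in>{0..T}. nonpos_vec (z \<tau> v* A + z' \<tau>)"
    and b: "nonpos_vec (z 0 v* J - z T + e *\<^sub>R (\<chi> i. 1))" by blast
  have "\<forall>\<tau>\<in>{0..T}. nonpos_vec (z (T - \<tau>) v* A - - z' (T - \<tau>))"
    using c by auto
  then show ?E
    using has_vector_derivative_reflect_interval[OF d] p e b
    by (intro exI[of _ "\<lambda>\<tau>. z (T - \<tau>)"] exI[of _ "\<lambda>\<tau>. - z' (T - \<tau>)"] exI[of _ e]) simp
qed

lemma vector_matrix_mult_mono:
  assumes "nonneg_mat E" "\<And>i. u $ i \<le> w $ i"
  shows "(u v* E) $ j \<le> (w v* E) $ j"
  using assms unfolding vector_matrix_mult_def nonneg_mat_def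
  by (auto intro!: sum_mono mult_right_mono)

lemma metzler_mexp_column_sum_pos:
  assumes A: "metzler A" and s: "0 \<le> s"
  shows "0 < ((\<chi> i. 1) v* mexp (s *\<^sub>R A)) $ j"
proof -
  define E where "E = mexp (s *\<^sub>R A)"
  have nn: "nonneg_mat E" using metzler_mexp_nonneg[OF A s] by (simp add: E_def)
  have "E *v axis j 1 \<noteq> 0"
  proof
    assume h: "E *v axis j 1 = 0"
    have "axis j (1::real) = (mexp ((-s) *\<^sub>R A) ** E) *v axis j 1"
      using mexp_inverse(2)[of s A] by (simp add: E_def)
    also have "\<dots> = 0" by (simp add: matrix_vector_mul_assoc[symmetric] h)
    finally show False by (simp add: axis_eq_0_iff)
  qed
  then obtain i where "(E *v axis j 1) $ i \<noteq> 0" by (metis vec_eq_iff zero_index)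
  then have "E $ i $ j \<noteq> 0" by (simp add: matrix_vector_mult_axis)
  then have "0 < E $ i $ j" using nn by (simp add: nonneg_mat_def order_le_neq_trans)
  also have "E $ i $ j \<le> (\<Sum>i'\<in>UNIV. E $ i' $ j)"
    using nn by (intro member_le_sum) (auto simp: nonneg_mat_def)
  finally show ?thesis by (simp add: vector_matrix_mult_def E_def)
qed

lemma has_vector_derivative_costate:
  fixes A :: "real^'n::finite^'n"
  assumes "(z has_vector_derivative z') (at \<tau> within S)"
  shows "((\<lambda>\<tau>. z \<tau> v* mexp ((T - \<tau>) *\<^sub>R A)) has_vector_derivative
      (z' - z \<tau> v* A) v* mexp ((T - \<tau>) *\<^sub>R A)) (at \<tau> within S)"
proof -
  have "((\<lambda>\<tau>. mexp ((T - \<tau>) *\<^sub>R A)) has_vector_derivative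
      (-1) *\<^sub>R (mexp ((T - \<tau>) *\<^sub>R A) ** A)) (at \<tau> within S)"
    by (rule has_vector_derivative_mexp_comp) (auto intro!: derivative_eq_intros)
  from bounded_bilinear.has_vector_derivative[OF bounded_bilinear_vector_matrix_mult assms this]
  show ?thesis
    unfolding mexp_commute vector_scaleR_matrix_ac vector_matrix_mul_assoc[symmetric]
      vector_matrix_mult_diff_distrib
    by simp
qed

text \<open>Under \<open>\<zeta>\<^sup>T A \<le> \<zeta>'\<^sup>T\<close>, the co-state \<open>\<zeta>(\<tau>)\<^sup>T mexp ((T - \<tau>) A)\<close> is nondecreasing: its
  derivative \<open>(\<zeta>' - \<zeta>\<^sup>T A) mexp ((T - \<tau>) A)\<close> is nonnegative.\<close>
lemma copositive_costate_mono:
  fixes A :: "real^'n::finite^'n"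
  assumes A: "metzler A" and T: "0 \<le> T"
    and d: "\<forall>\<tau>\<in>{0..T}. (z has_vector_derivative z' \<tau>) (at \<tau> within {0..T})"
    and c: "\<forall>\<tau>\<in>{0..T}. nonpos_vec (z \<tau> v* A - z' \<tau>)"
  shows "(z 0 v* mexp (T *\<^sub>R A)) $ j \<le> z T $ j"
proof -
  define E where "E = (\<lambda>\<tau>. mexp ((T - \<tau>) *\<^sub>R A))"
  define D where "D = (\<lambda>\<tau>. (z' \<tau> - z \<tau> v* A) v* E \<tau>)"
  have "((\<lambda>\<tau>. z \<tau> v* E \<tau>) has_vector_derivative D \<tau>) (at \<tau> within {0..T})"
    if "0 \<le> \<tau>" "\<tau> \<le> T" for \<tau>
    unfolding E_def D_def using d that by (intro has_vector_derivative_costate) simp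
  from bounded_linear.has_vector_derivative[OF bounded_linear_vec_nth this]
  have deriv: "((\<lambda>\<tau>. (z \<tau> v* E \<tau>) $ j) has_derivative (\<lambda>h. h *\<^sub>R D \<tau> $ j)) (at \<tau> within {0..T})"
    if "0 \<le> \<tau>" "\<tau> \<le> T" for \<tau>
    using that by (simp add: has_vector_derivative_def)
  obtain \<tau> where \<tau>: "\<tau> \<in> {0..T}"
    and eq: "(z T v* E T) $ j - (z 0 v* E 0) $ j = (T - 0) *\<^sub>R D \<tau> $ j"
    using mvt_very_simple[OF T deriv] by blast
  have "nonneg_mat (E \<tau>)" unfolding E_def using \<tau> by (intro metzler_mexp_nonneg A) simp
  moreover have "0 \<le> (z' \<tau> - z \<tau> v* A) $ i" for i
    using c \<tau> by (auto simp: nonpos_vec_def)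
  ultimately have "(0 v* E \<tau>) $ j \<le> ((z' \<tau> - z \<tau> v* A) v* E \<tau>) $ j"
    by (intro vector_matrix_mult_mono) simp_all
  then have "0 \<le> D \<tau> $ j"
    by (simp add: D_def)
  then have "0 \<le> T * D \<tau> $ j" using T by simp
  moreover have "z T $ j - (z 0 v* mexp (T *\<^sub>R A)) $ j = T * D \<tau> $ j"
    using eq by (simp add: E_def mexp_zero)
  ultimately show ?thesis by linarith
qed

lemma row_subinvariant_if_zeta_certificate:
  fixes A J :: "real^'n::finite^'n"
  assumes A: "metzler A" and T: "0 < T"
    and d: "\<forall>\<tau>\<in>{0..T}. (z has_vector_derivative z' \<tau>) (at \<tau> within {0..T})"
    and e: "0 < \<epsilon>" and c: "\<forall>\<tau>\<in>{0..T}. nonpos_vec (z \<tau> v* A - z' \<tau>)"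
    and b: "nonpos_vec (z T v* J - z 0 + \<epsilon> *\<^sub>R (\<chi> i. 1))"
  shows "neg_vec (z T v* (J ** mexp (T *\<^sub>R A) - mat 1))"
  unfolding neg_vec_def
proof
  fix j
  define E where "E = mexp (T *\<^sub>R A)"
  have "(z T v* J + \<epsilon> *\<^sub>R (\<chi> i. 1)) $ i \<le> z 0 $ i" for i
    using b[unfolded nonpos_vec_def, rule_format, of i] by simp
  then have "((z T v* J + \<epsilon> *\<^sub>R (\<chi> i. 1)) v* E) $ j \<le> (z 0 v* E) $ j"
    unfolding E_def using T by (intro vector_matrix_mult_mono metzler_mexp_nonneg A) simp_all
  also have "\<dots> \<le> z T $ j"
    unfolding E_def using T by (intro copositive_costate_mono[OF A _ d c]) simp
  finally have "(z T v* (J ** E)) $ j + \<epsilon> * ((\<chi> i. 1) v* E) $ j \<le> z T $ j"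
    by (simp add: vector_matrix_left_distrib scaleR_vector_matrix_assoc vector_matrix_mul_assoc)
  moreover have "0 < \<epsilon> * ((\<chi> i. 1) v* E) $ j"
    unfolding E_def using e T by (intro mult_pos_pos metzler_mexp_column_sum_pos A) simp_all
  ultimately show "(z T v* (J ** mexp (T *\<^sub>R A) - mat 1)) $ j < 0"
    by (simp add: E_def vector_matrix_mult_diff_rdistrib)
qed

lemma exists_pos_mult_less:
  fixes g h :: "'i::finite \<Rightarrow> real"
  assumes "\<And>j. 0 < g j"
  obtains \<epsilon> where "0 < \<epsilon>" "\<And>j. \<epsilon> * h j < g j"
proof
  define \<epsilon> where "\<epsilon> = Min (range (\<lambda>j. g j / (1 + \<bar>h j\<bar>)))"
  show "0 < \<epsilon>" unfolding \<epsilon>_def using assms by (simp add: add_pos_nonneg)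
  fix j
  have "\<epsilon> \<le> g j / (1 + \<bar>h j\<bar>)" unfolding \<epsilon>_def by (rule Min_le) auto
  then have "\<epsilon> * (1 + \<bar>h j\<bar>) \<le> g j" by (simp add: le_divide_eq add_pos_nonneg)
  moreover have "\<epsilon> * h j < \<epsilon> * (1 + \<bar>h j\<bar>)"
    using \<open>0 < \<epsilon>\<close> abs_ge_self[of "h j"] by (intro mult_strict_left_mono) simp_all
  ultimately show "\<epsilon> * h j < g j" by simp
qed

lemma exists_vector_matrix_bound:
  assumes "pos_vec d"
  obtains \<kappa> where "\<And>j. (d v* A) $ j \<le> \<kappa> * d $ j"
proof
  fix j
  define \<kappa> where "\<kappa> = (\<Sum>j\<in>UNIV. \<bar>(d v* A) $ j\<bar> / d $ j)"
  have "\<bar>(d v* A) $ j\<bar> / d $ j \<le> \<kappa>"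
    unfolding \<kappa>_def using assms
    by (intro member_le_sum) (auto simp: pos_vec_def intro: divide_nonneg_pos)
  then have "\<bar>(d v* A) $ j\<bar> \<le> \<kappa> * d $ j"
    using assms by (simp add: pos_vec_def divide_le_eq mult.commute)
  then show "(d v* A) $ j \<le> \<kappa> * d $ j"
    using abs_ge_self[of "(d v* A) $ j"] by linarith
qed

lemma has_vector_derivative_costate_witness:
  "((\<lambda>\<tau>. u v* mexp (\<tau> *\<^sub>R A) + exp (\<kappa> * (\<tau> - T)) *\<^sub>R d) has_vector_derivative
      (u v* mexp (\<tau> *\<^sub>R A)) v* A + (exp (\<kappa> * (\<tau> - T)) * \<kappa>) *\<^sub>R d) (at \<tau> within S)"
proof -
  have "((\<lambda>\<tau>. u v* mexp (\<tau> *\<^sub>R A)) has_vector_derivative u v* (mexp (\<tau> *\<^sub>R A) ** A))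
      (at \<tau> within S)"
    by (rule bounded_linear.has_vector_derivative[OF bounded_bilinear.bounded_linear_right[OF
          bounded_bilinear_vector_matrix_mult] has_vector_derivative_mexp])
  moreover have "((\<lambda>\<tau>. exp (\<kappa> * (\<tau> - T))) has_real_derivative exp (\<kappa> * (\<tau> - T)) * \<kappa>)
      (at \<tau> within S)"
    by (auto intro!: derivative_eq_intros)
  from has_vector_derivative_scaleR[OF this has_vector_derivative_const[of d]]
  have "((\<lambda>\<tau>. exp (\<kappa> * (\<tau> - T)) *\<^sub>R d) has_vector_derivative (exp (\<kappa> * (\<tau> - T)) * \<kappa>) *\<^sub>R d)
      (at \<tau> within S)"
    by simp
  ultimately show ?thesis
    unfolding vector_matrix_mul_assoc by (rule has_vector_derivative_add)
qed

lemma exists_perturbed_row_subinvariant: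
  fixes J E :: "real^'n::finite^'n"
  assumes "neg_vec (lam v* (J ** E - mat 1))"
  obtains \<epsilon> where "0 < \<epsilon>" "pos_vec (lam - (lam v* J + \<epsilon> *\<^sub>R (\<chi> i. 1)) v* E)"
proof -
  have "0 < lam $ j - (lam v* (J ** E)) $ j" for j
    using assms by (simp add: neg_vec_def vector_matrix_mult_diff_rdistrib)
  from exists_pos_mult_less[of "\<lambda>j. lam $ j - (lam v* (J ** E)) $ j" "\<lambda>j. ((\<chi> i. 1) v* E) $ j",
      OF this]
  obtain \<epsilon> where e: "0 < \<epsilon>"
    and small: "\<And>j. \<epsilon> * ((\<chi> i. 1) v* E) $ j < lam $ j - (lam v* (J ** E)) $ j"
    by blast
  have eq: "(lam - (lam v* J + \<epsilon> *\<^sub>R (\<chi> i. 1)) v* E) $ j =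
      lam $ j - (lam v* (J ** E)) $ j - \<epsilon> * ((\<chi> i. 1) v* E) $ j" for j
    by (simp add: vector_matrix_left_distrib scaleR_vector_matrix_assoc vector_matrix_mul_assoc)
  have "pos_vec (lam - (lam v* J + \<epsilon> *\<^sub>R (\<chi> i. 1)) v* E)"
    unfolding pos_vec_def
  proof
    show "0 < (lam - (lam v* J + \<epsilon> *\<^sub>R (\<chi> i. 1)) v* E) $ j" for j
      using small[of j] eq[of j] by linarith
  qed
  with e show ?thesis by (rule that)
qed

text \<open>With \<open>u = \<lambda>\<^sup>T J + \<epsilon> \<one>\<^sup>T\<close> and \<open>d = \<lambda>\<^sup>T - u mexp (T A) > 0\<close>, the witness is
  \<open>\<zeta>(\<tau>) = u mexp (\<tau> A) + exp (\<kappa> (\<tau> - T)) d\<close>, where \<open>d\<^sup>T A \<le> \<kappa> d\<^sup>T\<close>.\<close>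
lemma zeta_certificate_if_row_subinvariant:
  fixes A J :: "real^'n::finite^'n"
  assumes lam: "pos_vec lam" and neg: "neg_vec (lam v* (J ** mexp (T *\<^sub>R A) - mat 1))"
  shows "\<exists>\<zeta> \<zeta>' \<epsilon>.
          (\<forall>\<tau>\<in>{0..T}. (\<zeta> has_vector_derivative \<zeta>' \<tau>) (at \<tau> within {0..T})) \<and>
          pos_vec (\<zeta> T) \<and> \<epsilon> > (0::real) \<and>
          (\<forall>\<tau>\<in>{0..T}. nonpos_vec (\<zeta> \<tau> v* A - \<zeta>' \<tau>)) \<and>
          nonpos_vec (\<zeta> T v* J - \<zeta> 0 + \<epsilon> *\<^sub>R (\<chi> i. 1))"
proof -
  obtain \<epsilon> where e: "0 < \<epsilon>"
    and d: "pos_vec (lam - (lam v* J + \<epsilon> *\<^sub>R (\<chi> i. 1)) v* mexp (T *\<^sub>R A))"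
    using exists_perturbed_row_subinvariant[OF neg] by blast
  define u where "u = lam v* J + \<epsilon> *\<^sub>R (\<chi> i. 1)"
  define d where "d = lam - u v* mexp (T *\<^sub>R A)"
  obtain \<kappa> where \<kappa>: "\<And>j. (d v* A) $ j \<le> \<kappa> * d $ j"
    using exists_vector_matrix_bound[of d] d by (auto simp: d_def u_def)
  define z where "z = (\<lambda>\<tau>. u v* mexp (\<tau> *\<^sub>R A) + exp (\<kappa> * (\<tau> - T)) *\<^sub>R d)"
  define z' where "z' = (\<lambda>\<tau>. (u v* mexp (\<tau> *\<^sub>R A)) v* A + (exp (\<kappa> * (\<tau> - T)) * \<kappa>) *\<^sub>R d)"
  have "(z has_vector_derivative z' \<tau>) (at \<tau> within {0..T})" for \<tau>
    unfolding z_def z'_def by (rule has_vector_derivative_costate_witness)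
  moreover have "z T = lam" by (simp add: z_def d_def)
  moreover have "nonpos_vec (z \<tau> v* A - z' \<tau>)" for \<tau>
  proof -
    have "z \<tau> v* A - z' \<tau> = exp (\<kappa> * (\<tau> - T)) *\<^sub>R (d v* A - \<kappa> *\<^sub>R d)"
      by (simp add: z_def z'_def vector_matrix_left_distrib scaleR_vector_matrix_assoc algebra_simps)
    then show ?thesis
      using \<kappa> by (simp add: nonpos_vec_def mult_nonneg_nonpos)
  qed
  moreover have "nonpos_vec (z T v* J - z 0 + \<epsilon> *\<^sub>R (\<chi> i. 1))"
  proof -
    have "z 0 = u + exp (\<kappa> * (0 - T)) *\<^sub>R d" by (simp add: z_def mexp_zero)
    then have "z T v* J - z 0 + \<epsilon> *\<^sub>R (\<chi> i. 1) = - (exp (\<kappa> * (0 - T)) *\<^sub>R d)"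
      using \<open>z T = lam\<close> by (simp add: u_def)
    then show ?thesis
      using d by (simp add: nonpos_vec_def pos_vec_def d_def u_def less_imp_le)
  qed
  ultimately show ?thesis
    using lam e by (intro exI[of _ z] exI[of _ z'] exI[of _ \<epsilon>]) simp
qed

lemma zeta_certificate_iff_row_subinvariant:
  fixes A J :: "real^'n::finite^'n"
  assumes A: "metzler A" and T: "0 < T"
  shows "(\<exists>\<zeta> \<zeta>' \<epsilon>.
          (\<forall>\<tau>\<in>{0..T}. (\<zeta> has_vector_derivative \<zeta>' \<tau>) (at \<tau> within {0..T})) \<and>
          pos_vec (\<zeta> T) \<and> \<epsilon> > (0::real) \<and>
          (\<forall>\<tau>\<in>{0..T}. nonpos_vec (\<zeta> \<tau> v* A - \<zeta>' \<tau>)) \<and>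
          nonpos_vec (\<zeta> T v* J - \<zeta> 0 + \<epsilon> *\<^sub>R (\<chi> i. 1))) \<longleftrightarrow>
         (\<exists>lam. pos_vec lam \<and> neg_vec (lam v* (J ** mexp (T *\<^sub>R A) - mat 1)))"
  (is "?E \<longleftrightarrow> _")
proof
  assume ?E
  then obtain z z' \<epsilon> where "\<forall>\<tau>\<in>{0..T}. (z has_vector_derivative z' \<tau>) (at \<tau> within {0..T})"
    "pos_vec (z T)" "0 < \<epsilon>" "\<forall>\<tau>\<in>{0..T}. nonpos_vec (z \<tau> v* A - z' \<tau>)"
    "nonpos_vec (z T v* J - z 0 + \<epsilon> *\<^sub>R (\<chi> i. 1))"
    by blast
  with row_subinvariant_if_zeta_certificate[OF A T]
  show "\<exists>lam. pos_vec lam \<and> neg_vec (lam v* (J ** mexp (T *\<^sub>R A) - mat 1))"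
    by blast
next
  assume "\<exists>lam. pos_vec lam \<and> neg_vec (lam v* (J ** mexp (T *\<^sub>R A) - mat 1))"
  then show ?E
    using zeta_certificate_if_row_subinvariant by blast
qed

theorem theorem2:
  fixes A J :: "real^'n^'n" and Tb :: real
  assumes "metzler A" and "nonneg_mat J" and "Tb > 0"
  defines "M \<equiv> J ** mexp (Tb *\<^sub>R A)"
  shows
   "(gas_const_dwell A J Tb \<longleftrightarrow>
       (\<exists>lam mu. pos_vec lam \<and> pos_vec mu \<and>
          (\<forall>x. nonneg_vec x \<longrightarrow> lam \<bullet> (M *v x) - lam \<bullet> x \<le> - (mu \<bullet> x)))) \<and>
    (gas_const_dwell A J Tb \<longleftrightarrow>
       (\<exists>lam. pos_vec lam \<and> neg_vec (lam v* (M - mat 1)))) \<and>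
    (gas_const_dwell A J Tb \<longleftrightarrow> schur_stable M) \<and>
    (gas_const_dwell A J Tb \<longleftrightarrow>
       (\<exists>lam. pos_vec lam \<and> neg_vec ((M - mat 1) *v lam))) \<and>
    (gas_const_dwell A J Tb \<longleftrightarrow>
       schur_stable (mexp (Tb *\<^sub>R transpose A) ** transpose J)) \<and>
    (gas_const_dwell A J Tb \<longleftrightarrow>
       (\<exists>\<zeta> \<zeta>' \<epsilon>.
          (\<forall>\<tau>\<in>{0..Tb}. (\<zeta> has_vector_derivative \<zeta>' \<tau>) (at \<tau> within {0..Tb})) \<and>
          pos_vec (\<zeta> Tb) \<and> \<epsilon> > (0::real) \<and>
          (\<forall>\<tau>\<in>{0..Tb}. nonpos_vec (\<zeta> \<tau> v* A - \<zeta>' \<tau>)) \<and>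
          nonpos_vec (\<zeta> Tb v* J - \<zeta> 0 + \<epsilon> *\<^sub>R (\<chi> i. 1)))) \<and>
    (gas_const_dwell A J Tb \<longleftrightarrow>
       (\<exists>\<xi> \<xi>' \<epsilon>.
          (\<forall>\<tau>\<in>{0..Tb}. (\<xi> has_vector_derivative \<xi>' \<tau>) (at \<tau> within {0..Tb})) \<and>
          pos_vec (\<xi> 0) \<and> \<epsilon> > (0::real) \<and>
          (\<forall>\<tau>\<in>{0..Tb}. nonpos_vec (\<xi> \<tau> v* A + \<xi>' \<tau>)) \<and>
          nonpos_vec (\<xi> 0 v* J - \<xi> Tb + \<epsilon> *\<^sub>R (\<chi> i. 1))))"
proof -
  note A = assms(1) and J = assms(2) and T = assms(3)
  have M: "nonneg_mat M"
    unfolding M_def using T by (intro nonneg_mat_mult J metzler_mexp_nonneg A) simp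
  have gas: "gas_const_dwell A J Tb \<longleftrightarrow> matpow_vanishes M"
    unfolding M_def by (rule gas_const_dwell_iff_matpow_vanishes[OF T])
  note col = nonneg_matpow_vanishes_iff_subinvariant[OF M, symmetric]
  note row = nonneg_matpow_vanishes_iff_row_subinvariant[OF M, symmetric]
  have "mexp (Tb *\<^sub>R transpose A) ** transpose J = transpose M"
    unfolding M_def by (simp add: matrix_transpose_mul mexp_transpose[symmetric] transpose_scalar)
  then have schur_transpose:
    "schur_stable (mexp (Tb *\<^sub>R transpose A) ** transpose J) \<longleftrightarrow> matpow_vanishes M"
    using nonneg_schur_stable_iff_matpow_vanishes[of "transpose M"] M
    by (simp add: nonneg_mat_transpose matpow_vanishes_transpose)
  note schur = nonneg_schur_stable_iff_matpow_vanishes[OF M]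
  note lyapunov = lyapunov_decrease_iff_row_subinvariant[of M, unfolded row]
  have zeta: "(\<exists>\<zeta> \<zeta>' \<epsilon>.
      (\<forall>\<tau>\<in>{0..Tb}. (\<zeta> has_vector_derivative \<zeta>' \<tau>) (at \<tau> within {0..Tb})) \<and>
      pos_vec (\<zeta> Tb) \<and> \<epsilon> > (0::real) \<and>
      (\<forall>\<tau>\<in>{0..Tb}. nonpos_vec (\<zeta> \<tau> v* A - \<zeta>' \<tau>)) \<and>
      nonpos_vec (\<zeta> Tb v* J - \<zeta> 0 + \<epsilon> *\<^sub>R (\<chi> i. 1))) \<longleftrightarrow> matpow_vanishes M"
    using zeta_certificate_iff_row_subinvariant[OF A T] row unfolding M_def by simp
  note xi = zeta_certificate_iff_xi_certificate[of Tb A J, unfolded zeta]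
  show ?thesis
    unfolding gas lyapunov row schur col schur_transpose zeta xi[symmetric] by (intro conjI) simp_all
qed

end
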